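(* Let $\mathsf{X},\mathsf{Y}$ be Polish spaces and $c:\mathsf{X}\times\mathsf{Y}\to\mathbb{R}$ measurable. Let $\mu,\mu'\in\mathcal{P}(\mathsf{X})$ with $H(\mu'|\mu)<\infty$, $\nu,\nu'\in\mathcal{P}(\mathsf{Y})$ with $H(\nu'|\nu)<\infty$, and measurable $f,f':\mathsf{X}\to\mathbb{R}$, $g,g':\mathsf{Y}\to\mathbb{R}$ such that $$C_1:=\inf_{\alpha>0}\frac{2}{\alpha}\Big(\frac32+\log\int e^{\alpha|f'-f|}d\mu\Big)<\infty,\qquad C_2:=\inf_{\alpha>0}\frac{2}{\alpha}\Big(\frac32+\log\int e^{\alpha|g'-g|}d\nu\Big)<\infty.$$ Let $\pi\in\Pi(\mu,\nu)$ satisfy $d\pi=e^{f\oplus g-c}\,d(\mu\otimes\nu)$. (a) If $\pi'\in\Pi(\mu',\nu')$ and $d\pi'=e^{f'\oplus g'-c}\,d(\mu'\otimes\nu')$, then $$H(\pi'|\pi)+H(\pi|\pi')\le C_1\sqrt{H(\mu'|\mu)}+(1+C_1/2)H(\mu'|\mu)+H(\mu|\mu')+C_2\sqrt{H(\nu'|\nu)}+(1+C_2/2)H(\nu'|\nu)+H(\nu|\nu').$$ (b) If $\pi'\in\Pi(\mu',\nu')$ and $d\pi'=e^{f'\oplus g'-c}\,d(\mu\otimes\nu)$, then $$H(\pi'|\pi)+H(\pi|\pi')\le C_1\Big(\sqrt{H(\mu'|\mu)}+\tfrac12H(\mu'|\mu)\Big)+C_2\Big(\sqrt{H(\nu'|\nu)}+\tfrac12H(\nu'|\nu)\Big).$$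 Moreover, in both (a) and (b), if $\nu=\nu'$ then the requirement $C_2<\infty$ can be dropped.
   Context: Relative entropy: $H(\rho|\sigma)=\int\log\frac{d\rho}{d\sigma}\,d\rho$ if $\rho\ll\sigma$ and $+\infty$ otherwise. $\Pi(\mu,\nu)$ is the set of probability measures on $\mathsf{X}\times\mathsf{Y}$ with marginals $\mu$ and $\nu$. $(f\oplus g)(x,y):=f(x)+g(y)$. $\mathcal{P}(\mathsf{Z})$ denotes Borel probability measures on $\mathsf{Z}$. *)

theory Defs
  imports "HOL-Probability.Probability"
begin

text \<open>The integral is taken as (positive part) - (negative part) in ereal;
  for probability measures the negative part is always finite.\<close>
definition rel_entropy :: "'a measure \<Rightarrow> 'a measure \<Rightarrow> ereal" where
  "rel_entropy \<rho> \<sigma> =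
     (if sets \<rho> = sets \<sigma> \<and> absolutely_continuous \<sigma> \<rho> then
        enn2ereal (\<integral>\<^sup>+x. ennreal (max 0 (ln (enn2real (RN_deriv \<sigma> \<rho> x)))) \<partial>\<rho>)
        - enn2ereal (\<integral>\<^sup>+x. ennreal (max 0 (- ln (enn2real (RN_deriv \<sigma> \<rho> x)))) \<partial>\<rho>)
      else \<infinity>)"

definition borel_prob :: "'a::topological_space measure \<Rightarrow> bool" where
  "borel_prob \<mu> \<longleftrightarrow> prob_space \<mu> \<and> sets \<mu> = sets (borel :: 'a measure)"

definition couplings :: "'a::topological_space measure \<Rightarrow> 'b::topological_space measure
    \<Rightarrow> ('a \<times> 'b) measure set" where
  "couplings \<mu> \<nu> = {\<pi>. prob_space \<pi> \<and>
      sets \<pi> = sets ((borel :: 'a measure) \<Otimes>\<^sub>M (borel :: 'b measure)) \<and>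
      distr \<pi> borel fst = \<mu> \<and> distr \<pi> borel snd = \<nu>}"

text \<open>The constant inf_{alpha>0} (2/alpha)(3/2 + log int e^{alpha |h|} d mu), in [0,infinity].
  Values of alpha with infinite exponential moment contribute +infinity and are thus omitted.\<close>
definition exp_moment :: "'a measure \<Rightarrow> ('a \<Rightarrow> real) \<Rightarrow> real \<Rightarrow> ennreal" where
  "exp_moment \<mu> h \<alpha> = (\<integral>\<^sup>+x. ennreal (exp (\<alpha> * \<bar>h x\<bar>)) \<partial>\<mu>)"

definition tail_const :: "'a measure \<Rightarrow> ('a \<Rightarrow> real) \<Rightarrow> ereal" where
  "tail_const \<mu> h = (INF \<alpha>\<in>{\<alpha>. \<alpha> > 0 \<and> exp_moment \<mu> h \<alpha> < \<infinity>}.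
       ereal (2 / \<alpha> * (3/2 + ln (enn2real (exp_moment \<mu> h \<alpha>)))))"

end

(*
  The log-density of pi' with respect to pi splits into a function of x plus a function of y:
  the potential gaps f' - f and g' - g, plus log (d mu'/d mu) and log (d nu'/d nu) in part (a).
  Integrating it against both couplings, H(pi'|pi) + H(pi|pi') becomes the sum of the marginal
  terms int (f' - f) d(mu' - mu) and int (g' - g) d(nu' - nu), plus the four marginal entropies
  in part (a).

  Each marginal term is controlled by a transport inequality: if p is a probability density of
  finite entropy H with respect to mu and Y has exponential moments, then
    int Y p dmu - int Y dmu <= (3/2 + log int exp (2 |Y|) dmu) (sqrt H + H/2).
  For H >= 1 this is the Donsker-Varadhan variational formula. For H < 1, Y is truncated at
  level K with exp (2 K) = int exp (2 |Y|) dmu: the bounded part is handled by Hoeffding's lemma,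
  the tail by Young's inequality and a second order Taylor bound. Applying this to (alpha/2) h
  and taking the infimum over alpha yields the constants C1 and C2.

  When nu' = nu, integrability of g' - g with respect to nu comes for free: the negative part of
  the log-density is integrable in both directions, which bounds both parts of g' - g.
*)
theory Submission
  imports Defs
begin

lemma fenchel_young_exp:
  fixes a b :: real
  assumes "0 \<le> a"
  shows "a * b \<le> a * ln a - a + exp b"
proof (cases "a = 0")
  case False
  then have a: "a > 0" using assms by simp
  have "a * (1 + (b - ln a)) \<le> a * exp (b - ln a)"
    using a by (intro mult_left_mono) auto
  also have "\<dots> = exp b" using a by (simp add: exp_diff)
  finally show ?thesis by (simp add: algebra_simps)
qed simp

lemma mult_neg_ln_le_one:
  fixes a :: real
  assumes "0 \<le> a"
  shows "a * max 0 (- ln a) \<le> 1"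
proof (cases "0 < a \<and> a < 1")
  case True
  have "- ln a \<le> 1 / a - 1"
    using ln_le_minus_one[of "1 / a"] True by (simp add: ln_div)
  then have "a * (- ln a) \<le> a * (1 / a - 1)" using True by (intro mult_left_mono) auto
  also have "\<dots> = 1 - a" using True by (simp add: field_simps)
  finally show ?thesis using True by (auto simp: max_def)
qed (use assms in \<open>auto simp: max_def\<close>)

lemma exp_minus_one_minus_le:
  fixes t :: real
  shows "exp t - 1 - t \<le> t\<^sup>2 / 2 * exp \<bar>t\<bar>"
proof -
  obtain s where s: "\<bar>s\<bar> \<le> \<bar>t\<bar>"
    "exp t = (\<Sum>m<2. t ^ m / fact m) + exp s / fact 2 * t ^ 2"
    using Maclaurin_exp_le[of t 2] by blast
  have "exp s * t\<^sup>2 \<le> exp \<bar>t\<bar> * t\<^sup>2" using s(1) by (intro mult_right_mono) auto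
  moreover have "(\<Sum>m<2. t ^ m / fact m) = 1 + t" by (simp add: numeral_2_eq_2)
  ultimately show ?thesis using s(2) by (simp add: fact_numeral mult.commute)
qed

lemma power2_le_exp:
  fixes y :: real
  assumes "0 \<le> y"
  shows "y\<^sup>2 \<le> exp y"
proof -
  obtain s where "exp y = (\<Sum>m<4. y ^ m / fact m) + exp s / fact 4 * y ^ 4"
    using Maclaurin_exp_le[of y 4] by blast
  moreover have "(\<Sum>m<4. y ^ m / fact m) = 1 + y + y\<^sup>2 / 2 + y ^ 3 / 6"
    by (simp add: numeral_eq_Suc fact_numeral)
  moreover have "0 \<le> exp s / fact 4 * y ^ 4" by simp
  moreover have "0 \<le> y * ((y - 3 / 2)\<^sup>2 + 15 / 4)" using assms by simp
  then have "y\<^sup>2 \<le> 1 + y + y\<^sup>2 / 2 + y ^ 3 / 6"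
    by (simp add: power2_eq_square power3_eq_cube algebra_simps)
  ultimately show ?thesis by linarith
qed

lemma le_two_sqrt_mult_of_le_div_plus_mult:
  fixes x A B :: real
  assumes "0 \<le> A" "0 \<le> B" and le: "\<And>l. 0 < l \<Longrightarrow> x \<le> A / l + B * l"
  shows "x \<le> 2 * sqrt (A * B)"
proof (cases "A > 0 \<and> B > 0")
  case True
  define l where "l = sqrt (A / B)"
  have "A / l = sqrt (A * B)" "B * l = sqrt (A * B)"
    using True by (simp_all add: l_def real_sqrt_divide real_sqrt_mult field_simps)
  then show ?thesis using le[of l] True by (simp add: l_def)
next
  case False
  have "x \<le> 0 + e" if "0 < e" for e
  proof (cases "A = 0")
    case True
    have "x \<le> B * (e / (B + 1))" using le[of "e / (B + 1)"] True \<open>0 < e\<close> assms by simp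
    also have "\<dots> \<le> e" using \<open>0 < e\<close> assms by (simp add: field_simps)
    finally show ?thesis by simp
  next
    case A: False
    then have "B = 0" using False assms by simp
    have "x \<le> A / ((A + 1) / e)" using le[of "(A + 1) / e"] \<open>B = 0\<close> \<open>0 < e\<close> assms by simp
    also have "\<dots> \<le> e" using \<open>0 < e\<close> assms by (simp add: field_simps)
    finally show ?thesis by simp
  qed
  then have "x \<le> 0" by (rule field_le_epsilon)
  moreover have "0 \<le> sqrt (A * B)" using assms(1,2) by simp
  ultimately show ?thesis by linarith
qed

lemma le_three_halves_sqrt_of_le_div_plus_half:
  fixes x H :: real
  assumes "0 \<le> H" "H \<le> 1" and le: "\<And>l. 0 < l \<Longrightarrow> l \<le> 1 \<Longrightarrow> x \<le> H / l + l / 2"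
  shows "x \<le> 3 / 2 * sqrt H"
proof (cases "H = 0")
  case True
  have "x \<le> 0 + e" if "0 < e" for e
  proof -
    define l where "l = min 1 e"
    have l: "0 < l" "l \<le> 1" "l \<le> e" using \<open>0 < e\<close> by (auto simp: l_def)
    have "x \<le> H / l + l / 2" by (rule le[OF l(1,2)])
    also have "H / l = 0" using True by simp
    finally show ?thesis using l by linarith
  qed
  then have "x \<le> 0" by (rule field_le_epsilon)
  with True show ?thesis by simp
next
  case False
  then have "0 < H" using assms(1) by simp
  have "x \<le> H / sqrt H + sqrt H / 2" using \<open>0 < H\<close> assms(2) by (intro le) auto
  also have "H / sqrt H = sqrt H" using assms(1) by (rule real_div_sqrt)
  finally show ?thesis by simp
qed

lemma exp_truncation_remainder_le:
  fixes y K l :: real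
  assumes K: "0 \<le> K" and l: "0 < l" "l \<le> 1"
  defines "r \<equiv> y - max (- K) (min K y)"
  shows "exp (l * r) - 1 - l * r \<le> l\<^sup>2 / 2 * (exp (2 * \<bar>y\<bar>) / exp (2 * K))"
proof -
  define t where "t = \<bar>r\<bar>"
  have t: "t = max 0 (\<bar>y\<bar> - K)" using K by (auto simp: t_def r_def max_def min_def)
  have "exp (l * r) - 1 - l * r \<le> (l * r)\<^sup>2 / 2 * exp \<bar>l * r\<bar>"
    by (rule exp_minus_one_minus_le)
  also have "\<dots> = l\<^sup>2 / 2 * (t\<^sup>2 * exp (l * t))"
    using l by (simp add: t_def power_mult_distrib abs_mult)
  also have "\<dots> \<le> l\<^sup>2 / 2 * (t\<^sup>2 * exp t)"
    using l by (intro mult_left_mono) (auto simp: t_def intro!: mult_left_le_one_le)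
  also have "t\<^sup>2 * exp t \<le> exp (2 * \<bar>y\<bar>) / exp (2 * K)"
  proof (cases "t = 0")
    case False
    then have "t = \<bar>y\<bar> - K" "0 \<le> t" using t by (auto simp: max_def split: if_splits)
    then have "t\<^sup>2 * exp t \<le> exp t * exp t" using power2_le_exp by (intro mult_right_mono) auto
    also have "\<dots> = exp (2 * \<bar>y\<bar>) / exp (2 * K)"
      using \<open>t = \<bar>y\<bar> - K\<close> by (simp add: exp_add[symmetric] exp_diff[symmetric] algebra_simps)
    finally show ?thesis .
  qed simp
  then have "l\<^sup>2 / 2 * (t\<^sup>2 * exp t) \<le> l\<^sup>2 / 2 * (exp (2 * \<bar>y\<bar>) / exp (2 * K))"
    by (intro mult_left_mono) auto
  finally show ?thesis .
qed

lemma integrable_of_integrable_exp_abs: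
  fixes Y :: "'a \<Rightarrow> real"
  assumes "Y \<in> borel_measurable M" "integrable M (\<lambda>x. exp \<bar>Y x\<bar>)"
  shows "integrable M Y"
proof -
  have "integrable M (\<lambda>x. \<bar>Y x\<bar>)"
  proof (rule Bochner_Integration.integrable_bound[OF assms(2)])
    show "AE x in M. norm \<bar>Y x\<bar> \<le> norm (exp \<bar>Y x\<bar>)"
    proof (intro AE_I2)
      fix x show "norm \<bar>Y x\<bar> \<le> norm (exp \<bar>Y x\<bar>)"
        using exp_ge_add_one_self[of "\<bar>Y x\<bar>"] by (simp only: real_norm_def abs_abs abs_exp_cancel)
    qed
  qed (use assms(1) in simp)
  then show ?thesis using assms(1) by (simp add: integrable_abs_iff)
qed

lemma integrable_exp_abs_dominated:
  fixes Y Z :: "'a \<Rightarrow> real"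
  assumes "integrable M (\<lambda>x. exp (2 * \<bar>Y x\<bar>))" and "Z \<in> borel_measurable M"
    and "\<And>x. \<bar>Z x\<bar> \<le> \<bar>Y x\<bar>"
  shows "integrable M (\<lambda>x. exp \<bar>Z x\<bar>)"
proof (rule Bochner_Integration.integrable_bound[OF assms(1)])
  show "AE x in M. norm (exp \<bar>Z x\<bar>) \<le> norm (exp (2 * \<bar>Y x\<bar>))"
  proof (intro AE_I2)
    fix x show "norm (exp \<bar>Z x\<bar>) \<le> norm (exp (2 * \<bar>Y x\<bar>))" using assms(3)[of x] by simp
  qed
qed (use assms(2) in simp)

lemma integral_diff_commute: "(\<integral>x. f x - g x \<partial>M) = - (\<integral>x. g x - f x \<partial>M :: real)"
  by (subst Bochner_Integration.integral_minus[symmetric]) simp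

lemma integrable_diff_commute: "integrable M (\<lambda>x. g x - f x :: real) \<Longrightarrow> integrable M (\<lambda>x. f x - g x)"
  by (drule Bochner_Integration.integrable_minus) simp

lemma integrable_of_nn_integral_pos_neg:
  fixes h :: "'a \<Rightarrow> real"
  assumes "h \<in> borel_measurable M"
    and "(\<integral>\<^sup>+x. ennreal (h x) \<partial>M) < \<infinity>" and "(\<integral>\<^sup>+x. ennreal (- h x) \<partial>M) < \<infinity>"
  shows "integrable M h"
  using assms unfolding real_integrable_def by (auto simp: less_top)

section \<open>Densities of finite entropy and the transport inequality\<close>

locale finite_entropy_density = prob_space M for M :: "'a measure" +
  fixes p :: "'a \<Rightarrow> real"
  assumes p_measurable [measurable]: "p \<in> borel_measurable M"
    and p_nonneg: "0 \<le> p x"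
    and p_integrable: "integrable M p"
    and p_integral: "(\<integral>x. p x \<partial>M) = 1"
    and p_ln_p_integrable: "integrable M (\<lambda>x. p x * ln (p x))"
begin

definition density_entropy :: real where
  "density_entropy = (\<integral>x. p x * ln (p x) \<partial>M)"

lemma integral_young_remainder: "(\<integral>x. p x * ln (p x) - p x + 1 \<partial>M) = density_entropy"
  using p_integrable p_ln_p_integrable p_integral by (simp add: density_entropy_def prob_space)

lemma density_entropy_nonneg: "0 \<le> density_entropy"
  unfolding integral_young_remainder[symmetric]
  using fenchel_young_exp[OF p_nonneg, of _ 0] by (intro integral_nonneg_AE) auto

lemma integrable_mult_density:
  fixes Z :: "'a \<Rightarrow> real"
  assumes [measurable]: "Z \<in> borel_measurable M"
    and "integrable M (\<lambda>x. exp \<bar>Z x\<bar>)"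
  shows "integrable M (\<lambda>x. Z x * p x)"
proof (rule Bochner_Integration.integrable_bound)
  show "integrable M (\<lambda>x. p x * ln (p x) - p x + exp \<bar>Z x\<bar>)"
    using assms(2) p_integrable p_ln_p_integrable by auto
  show "AE x in M. norm (Z x * p x) \<le> norm (p x * ln (p x) - p x + exp \<bar>Z x\<bar>)"
  proof (intro AE_I2)
    fix x
    have "p x * \<bar>Z x\<bar> \<le> p x * ln (p x) - p x + exp \<bar>Z x\<bar>" by (rule fenchel_young_exp[OF p_nonneg])
    then show "norm (Z x * p x) \<le> norm (p x * ln (p x) - p x + exp \<bar>Z x\<bar>)"
      using p_nonneg[of x] by (simp add: abs_mult mult.commute)
  qed
qed simp

lemma donsker_varadhan:
  fixes Z :: "'a \<Rightarrow> real"
  assumes [measurable]: "Z \<in> borel_measurable M"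
    and iE: "integrable M (\<lambda>x. exp (Z x))" and iZ: "integrable M (\<lambda>x. Z x * p x)"
  shows "(\<integral>x. Z x * p x \<partial>M) \<le> density_entropy + ln (\<integral>x. exp (Z x) \<partial>M)"
proof -
  define C where "C = (\<integral>x. exp (Z x) \<partial>M)"
  have C: "0 < C"
    using integral_less_AE_space[of "\<lambda>x. 0" "\<lambda>x. exp (Z x)"] iE by (simp add: C_def emeasure_space_1)
  \<comment> \<open>Young's inequality with b = Z x - ln C, integrated\<close>
  have "(\<integral>x. Z x * p x \<partial>M) - ln C = (\<integral>x. p x * (Z x - ln C) \<partial>M)"
    using iZ p_integrable p_integral by (simp add: algebra_simps)
  also have "\<dots> \<le> (\<integral>x. p x * ln (p x) - p x + exp (Z x) / C \<partial>M)"
  proof (intro integral_mono)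
    show "p x * (Z x - ln C) \<le> p x * ln (p x) - p x + exp (Z x) / C" for x
      using fenchel_young_exp[OF p_nonneg, of x "Z x - ln C"] C by (simp add: exp_diff)
  qed (use iZ iE p_integrable p_ln_p_integrable in \<open>auto simp: right_diff_distrib mult.commute[of "p _"]\<close>)
  also have "\<dots> = density_entropy"
    using iE p_integrable p_ln_p_integrable p_integral C by (simp add: C_def density_entropy_def)
  finally show ?thesis by (simp add: C_def)
qed

end

lemma (in prob_space) hoeffding_integral_exp:
  fixes Y :: "'a \<Rightarrow> real" and a b l :: real
  assumes [measurable]: "Y \<in> borel_measurable M" and Y: "\<And>x. Y x \<in> {a..b}" and l: "0 < l"
  shows "integrable M (\<lambda>x. exp (l * (Y x - expectation Y)))"
    and "(\<integral>x. exp (l * (Y x - expectation Y)) \<partial>M) \<le> exp (l\<^sup>2 * (b - a)\<^sup>2 / 8)"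
proof -
  interpret Y: interval_bounded_random_variable M Y a b
    by unfold_locales (use Y in auto)
  have "Y x - expectation Y \<le> \<bar>a\<bar> + \<bar>b\<bar> + \<bar>expectation Y\<bar>" for x
    using Y[of x] by (auto simp: abs_if)
  then show i: "integrable M (\<lambda>x. exp (l * (Y x - expectation Y)))"
    using l by (intro integrable_const_bound[where B = "exp (l * (\<bar>a\<bar> + \<bar>b\<bar> + \<bar>expectation Y\<bar>))"])
      (auto intro!: AE_I2 mult_left_mono)
  have "ennreal (\<integral>x. exp (l * (Y x - expectation Y)) \<partial>M) = (\<integral>\<^sup>+x. exp (l * (Y x - expectation Y)) \<partial>M)"
    using i by (intro nn_integral_eq_integral[symmetric]) auto
  also have "\<dots> \<le> ennreal (exp (l\<^sup>2 * (b - a)\<^sup>2 / 8))"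
    by (rule Y.Hoeffdings_lemma_nn_integral[OF l])
  finally show "(\<integral>x. exp (l * (Y x - expectation Y)) \<partial>M) \<le> exp (l\<^sup>2 * (b - a)\<^sup>2 / 8)"
    by simp
qed

context finite_entropy_density
begin

lemma transport_bounded:
  fixes Y :: "'a \<Rightarrow> real" and a b :: real
  assumes [measurable]: "Y \<in> borel_measurable M" and Y: "\<And>x. Y x \<in> {a..b}"
  shows "(\<integral>x. Y x * p x \<partial>M) - (\<integral>x. Y x \<partial>M) \<le> (b - a) * sqrt (density_entropy / 2)"
proof -
  define m where "m = (\<integral>x. Y x \<partial>M)"
  have "\<bar>Y x\<bar> \<le> \<bar>a\<bar> + \<bar>b\<bar>" for x using Y[of x] by auto
  then have "integrable M (\<lambda>x. exp \<bar>Y x\<bar>)"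
    by (intro integrable_const_bound[where B = "exp (\<bar>a\<bar> + \<bar>b\<bar>)"]) auto
  then have iYp: "integrable M (\<lambda>x. Y x * p x)" by (intro integrable_mult_density) auto
  have "(\<integral>x. Y x * p x \<partial>M) - m \<le> density_entropy / l + (b - a)\<^sup>2 / 8 * l" if l: "0 < l" for l
  proof -
    note hoeffding = hoeffding_integral_exp[OF assms(1) Y l, folded m_def]
    have "l * ((\<integral>x. Y x * p x \<partial>M) - m) = (\<integral>x. l * (Y x - m) * p x \<partial>M)"
      using iYp p_integrable p_integral by (simp add: algebra_simps)
    also have "\<dots> \<le> density_entropy + ln (\<integral>x. exp (l * (Y x - m)) \<partial>M)"
      using iYp p_integrable hoeffding(1) by (intro donsker_varadhan) (auto simp: algebra_simps)
    also have "ln (\<integral>x. exp (l * (Y x - m)) \<partial>M) \<le> ln (exp (l\<^sup>2 * (b - a)\<^sup>2 / 8))"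
      using hoeffding integral_less_AE_space[of "\<lambda>x. 0" "\<lambda>x. exp (l * (Y x - m))"]
      by (subst ln_le_cancel_iff) (auto simp: emeasure_space_1)
    finally show ?thesis using l by (simp add: field_simps power2_eq_square)
  qed
  then have "(\<integral>x. Y x * p x \<partial>M) - m \<le> 2 * sqrt (density_entropy * ((b - a)\<^sup>2 / 8))"
    by (intro le_two_sqrt_mult_of_le_div_plus_mult density_entropy_nonneg) auto
  also have "2 * sqrt (density_entropy * ((b - a)\<^sup>2 / 8)) = (b - a) * sqrt (density_entropy / 2)"
  proof -
    have "a \<le> b" using Y[of undefined] by simp
    have "(b - a) * sqrt (density_entropy / 2) = sqrt ((b - a)\<^sup>2 * (density_entropy / 2))"
      using \<open>a \<le> b\<close> by (subst real_sqrt_mult) simp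
    also have "\<dots> = sqrt (4 * (density_entropy * ((b - a)\<^sup>2 / 8)))"
      by (rule arg_cong[where f = sqrt]) (simp add: field_simps)
    also have "\<dots> = 2 * sqrt (density_entropy * ((b - a)\<^sup>2 / 8))"
      by (simp only: real_sqrt_mult real_sqrt_four)
    finally show ?thesis by simp
  qed
  finally show ?thesis by (simp add: m_def)
qed

lemma transport_truncation_tail:
  fixes Y :: "'a \<Rightarrow> real" and K :: real
  assumes [measurable]: "Y \<in> borel_measurable M" and K: "0 \<le> K"
    and iY: "integrable M (\<lambda>x. exp (2 * \<bar>Y x\<bar>))"
    and EK: "(\<integral>x. exp (2 * \<bar>Y x\<bar>) \<partial>M) \<le> exp (2 * K)"
    and H1: "density_entropy \<le> 1"
  defines "R \<equiv> \<lambda>x. Y x - max (- K) (min K (Y x))"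
  shows "(\<integral>x. R x * p x \<partial>M) - (\<integral>x. R x \<partial>M) \<le> 3 / 2 * sqrt density_entropy"
proof (rule le_three_halves_sqrt_of_le_div_plus_half[OF density_entropy_nonneg H1])
  have [measurable]: "R \<in> borel_measurable M" unfolding R_def by measurable
  have iR: "integrable M (\<lambda>x. exp \<bar>R x\<bar>)"
    using K by (intro integrable_exp_abs_dominated[OF iY]) (auto simp: R_def)
  have iRp: "integrable M (\<lambda>x. R x * p x)" by (rule integrable_mult_density) (use iR in auto)
  have iR': "integrable M R" by (rule integrable_of_integrable_exp_abs) (use iR in auto)
  fix l :: real assume l: "0 < l" "l \<le> 1"
  \<comment> \<open>Young's inequality with b = l R x, plus the second order Taylor bound on the remainder\<close>
  have pt: "l * (R x * p x - R x) \<le>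
      (p x * ln (p x) - p x + 1) + l\<^sup>2 / 2 * (exp (2 * \<bar>Y x\<bar>) / exp (2 * K))" for x
    using fenchel_young_exp[OF p_nonneg, of x "l * R x"] exp_truncation_remainder_le[OF K l, of "Y x"]
    by (simp add: R_def algebra_simps)
  have "l * ((\<integral>x. R x * p x \<partial>M) - (\<integral>x. R x \<partial>M)) = (\<integral>x. l * (R x * p x - R x) \<partial>M)"
    using iRp iR' by simp
  also have "\<dots> \<le> (\<integral>x. (p x * ln (p x) - p x + 1) + l\<^sup>2 / 2 * (exp (2 * \<bar>Y x\<bar>) / exp (2 * K)) \<partial>M)"
    using pt iRp iR' iY p_integrable p_ln_p_integrable by (intro integral_mono) auto
  also have "\<dots> = density_entropy + l\<^sup>2 / 2 * ((\<integral>x. exp (2 * \<bar>Y x\<bar>) \<partial>M) / exp (2 * K))"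
    using iY p_integrable p_ln_p_integrable by (simp add: integral_young_remainder[symmetric])
  also have "\<dots> \<le> density_entropy + l\<^sup>2 / 2"
    using EK by (intro add_left_mono mult_left_le) (auto simp: divide_le_eq_1)
  finally show "(\<integral>x. R x * p x \<partial>M) - (\<integral>x. R x \<partial>M) \<le> density_entropy / l + l / 2"
    using l by (simp add: field_simps power2_eq_square)
qed

lemma transport_inequality_large_entropy:
  fixes Y :: "'a \<Rightarrow> real"
  assumes [measurable]: "Y \<in> borel_measurable M" and iY: "integrable M (\<lambda>x. exp (2 * \<bar>Y x\<bar>))"
    and H1: "1 \<le> density_entropy"
  shows "(\<integral>x. Y x * p x \<partial>M) - (\<integral>x. Y x \<partial>M) \<le>
    (3 / 2 + ln (\<integral>x. exp (2 * \<bar>Y x\<bar>) \<partial>M)) * (sqrt density_entropy + density_entropy / 2)"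
proof -
  define E where "E = (\<integral>x. exp (2 * \<bar>Y x\<bar>) \<partial>M)"
  define H where "H = density_entropy"
  have E1: "1 \<le> E"
    using integral_mono[of M "\<lambda>x. 1" "\<lambda>x. exp (2 * \<bar>Y x\<bar>)"] iY by (simp add: E_def prob_space)
  have iexp: "integrable M (\<lambda>x. exp \<bar>Y x\<bar>)" by (rule integrable_exp_abs_dominated[OF iY]) auto
  have iY': "integrable M Y" by (rule integrable_of_integrable_exp_abs) (use iexp in auto)
  have iYp: "integrable M (\<lambda>x. Y x * p x)" by (rule integrable_mult_density) (use iexp in auto)
  have i2Y: "integrable M (\<lambda>x. exp (2 * Y x))"
    by (rule Bochner_Integration.integrable_bound[OF iY]) auto
  have "2 * (\<integral>x. Y x * p x \<partial>M) = (\<integral>x. 2 * Y x * p x \<partial>M)" by (simp add: mult.assoc)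
  also have "\<dots> \<le> H + ln (\<integral>x. exp (2 * Y x) \<partial>M)"
    unfolding H_def using i2Y iYp by (intro donsker_varadhan) (auto simp: mult.assoc)
  finally have "2 * (\<integral>x. Y x * p x \<partial>M) \<le> H + ln (\<integral>x. exp (2 * Y x) \<partial>M)" .
  moreover have "ln (\<integral>x. exp (2 * Y x) \<partial>M) \<le> ln E"
    using integral_less_AE_space[of "\<lambda>x. 0" "\<lambda>x. exp (2 * Y x)"] i2Y iY E1
    by (subst ln_le_cancel_iff) (auto simp: E_def emeasure_space_1 intro!: integral_mono)
  moreover have "- (\<integral>x. Y x \<partial>M) \<le> (\<integral>x. \<bar>Y x\<bar> \<partial>M)"
    using integral_mono[of M "\<lambda>x. - Y x" "\<lambda>x. \<bar>Y x\<bar>"] iY' by simp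
  moreover have "2 * (\<integral>x. \<bar>Y x\<bar> \<partial>M) \<le> ln E"
  proof -
    have "exp (\<integral>x. 2 * \<bar>Y x\<bar> \<partial>M) \<le> E"
      unfolding E_def using iY' iY exp_convex by (intro jensens_inequality[where I = UNIV]) auto
    then show ?thesis using E1 by (simp add: ln_ge_iff)
  qed
  moreover have "H / 2 + ln E \<le> (3 / 2 + ln E) * (sqrt H + H / 2)"
  proof -
    have "ln E \<le> ln E * sqrt H" using H1 E1 by (simp add: H_def mult_le_cancel_left1)
    moreover have "0 \<le> ln E * H" using H1 E1 by (simp add: H_def)
    ultimately show ?thesis using H1 unfolding H_def[symmetric]
      by (simp add: algebra_simps) (use real_sqrt_ge_zero[of H] in linarith)
  qed
  ultimately show ?thesis by (simp add: E_def H_def)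
qed

lemma transport_inequality_small_entropy:
  fixes Y :: "'a \<Rightarrow> real"
  assumes [measurable]: "Y \<in> borel_measurable M" and iY: "integrable M (\<lambda>x. exp (2 * \<bar>Y x\<bar>))"
    and H1: "density_entropy \<le> 1"
  shows "(\<integral>x. Y x * p x \<partial>M) - (\<integral>x. Y x \<partial>M) \<le>
    (3 / 2 + ln (\<integral>x. exp (2 * \<bar>Y x\<bar>) \<partial>M)) * (sqrt density_entropy + density_entropy / 2)"
proof -
  define E where "E = (\<integral>x. exp (2 * \<bar>Y x\<bar>) \<partial>M)"
  define H where "H = density_entropy"
  have H0: "0 \<le> H" unfolding H_def by (rule density_entropy_nonneg)
  have E1: "1 \<le> E"
    using integral_mono[of M "\<lambda>x. 1" "\<lambda>x. exp (2 * \<bar>Y x\<bar>)"] iY by (simp add: E_def prob_space)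
  \<comment> \<open>split Y at the level K with exp (2 K) = E into a bounded part T and a tail Y - T\<close>
  define K where "K = ln E / 2"
  have K: "0 \<le> K" using E1 by (simp add: K_def)
  define T where "T x = max (- K) (min K (Y x))" for x
  have [measurable]: "T \<in> borel_measurable M" unfolding T_def by measurable
  have iexp: "integrable M (\<lambda>x. exp \<bar>Y x\<bar>)" by (rule integrable_exp_abs_dominated[OF iY]) auto
  have iexpT: "integrable M (\<lambda>x. exp \<bar>T x\<bar>)"
    using K by (intro integrable_exp_abs_dominated[OF iY]) (auto simp: T_def)
  have "integrable M Y" "integrable M T"
    using iexp iexpT by (auto intro: integrable_of_integrable_exp_abs)
  moreover have "integrable M (\<lambda>x. Y x * p x)" "integrable M (\<lambda>x. T x * p x)"
    using iexp iexpT by (auto intro: integrable_mult_density)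
  ultimately have "(\<integral>x. Y x * p x \<partial>M) - (\<integral>x. Y x \<partial>M) =
      ((\<integral>x. T x * p x \<partial>M) - (\<integral>x. T x \<partial>M)) + ((\<integral>x. (Y x - T x) * p x \<partial>M) - (\<integral>x. Y x - T x \<partial>M))"
    by (simp add: left_diff_distrib)
  also have "(\<integral>x. T x * p x \<partial>M) - (\<integral>x. T x \<partial>M) \<le> (K - - K) * sqrt (H / 2)"
    unfolding H_def using K by (intro transport_bounded) (auto simp: T_def)
  also have "(\<integral>x. (Y x - T x) * p x \<partial>M) - (\<integral>x. Y x - T x \<partial>M) \<le> 3 / 2 * sqrt H"
    unfolding H_def T_def using K iY H1 E1 by (intro transport_truncation_tail) (auto simp: K_def E_def)
  also have "(K - - K) * sqrt (H / 2) + 3 / 2 * sqrt H \<le> (3 / 2 + ln E) * (sqrt H + H / 2)"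
  proof -
    have "(K - - K) * sqrt (H / 2) \<le> ln E * sqrt H"
      using K H0 by (intro mult_mono) (auto simp: K_def)
    moreover have "0 \<le> ln E * H" using H0 E1 by simp
    ultimately show ?thesis by (simp add: algebra_simps) (use real_sqrt_ge_zero[OF H0] H0 in linarith)
  qed
  finally show ?thesis by (simp add: E_def H_def)
qed

lemma transport_inequality:
  fixes Y :: "'a \<Rightarrow> real"
  assumes "Y \<in> borel_measurable M" and "integrable M (\<lambda>x. exp (2 * \<bar>Y x\<bar>))"
  shows "(\<integral>x. Y x * p x \<partial>M) - (\<integral>x. Y x \<partial>M) \<le>
    (3 / 2 + ln (\<integral>x. exp (2 * \<bar>Y x\<bar>) \<partial>M)) * (sqrt density_entropy + density_entropy / 2)"
  using transport_inequality_large_entropy[OF assms] transport_inequality_small_entropy[OF assms]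
  by (cases "1 \<le> density_entropy") auto

end

lemma exp_moment_finite_integral:
  fixes h :: "'a \<Rightarrow> real"
  assumes [measurable]: "h \<in> borel_measurable M" and fin: "exp_moment M h \<alpha> < \<infinity>"
  shows "integrable M (\<lambda>x. exp (\<alpha> * \<bar>h x\<bar>))"
    and "enn2real (exp_moment M h \<alpha>) = (\<integral>x. exp (\<alpha> * \<bar>h x\<bar>) \<partial>M)"
proof -
  show i: "integrable M (\<lambda>x. exp (\<alpha> * \<bar>h x\<bar>))"
    using fin unfolding real_integrable_def exp_moment_def by (auto simp: ennreal_neg)
  have "exp_moment M h \<alpha> = ennreal (\<integral>x. exp (\<alpha> * \<bar>h x\<bar>) \<partial>M)"
    unfolding exp_moment_def by (rule nn_integral_eq_integral[OF i]) simp
  then show "enn2real (exp_moment M h \<alpha>) = (\<integral>x. exp (\<alpha> * \<bar>h x\<bar>) \<partial>M)" by simp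
qed

lemma (in prob_space) tail_const_nonneg: "0 \<le> tail_const M h"
  unfolding tail_const_def
proof (rule INF_greatest)
  fix \<alpha> assume \<alpha>: "\<alpha> \<in> {\<alpha>. 0 < \<alpha> \<and> exp_moment M h \<alpha> < \<infinity>}"
  have "1 = (\<integral>\<^sup>+x. 1 \<partial>M)" by (simp add: emeasure_space_1)
  also have "\<dots> \<le> exp_moment M h \<alpha>"
    unfolding exp_moment_def using \<alpha> by (intro nn_integral_mono) auto
  finally have "1 \<le> exp_moment M h \<alpha>" .
  then have "enn2real 1 \<le> enn2real (exp_moment M h \<alpha>)"
    using \<alpha> by (intro enn2real_mono) auto
  then show "0 \<le> ereal (2 / \<alpha> * (3 / 2 + ln (enn2real (exp_moment M h \<alpha>))))" using \<alpha> by simp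
qed

lemma ereal_le_INF_mult:
  fixes c :: "'i \<Rightarrow> real" and D s :: real
  assumes "S \<noteq> {}" and "0 \<le> s" and le: "\<And>a. a \<in> S \<Longrightarrow> D \<le> c a * s"
  shows "ereal D \<le> (INF a\<in>S. ereal (c a)) * ereal s"
proof (cases "s = 0")
  case True
  then show ?thesis using assms(1) le by (auto simp: zero_ereal_def[symmetric])
next
  case False
  then have "0 < s" using assms(2) by simp
  have "ereal (D / s) \<le> (INF a\<in>S. ereal (c a))"
    using le \<open>0 < s\<close> by (intro INF_greatest) (simp add: divide_le_eq)
  then have "ereal (D / s) * ereal s \<le> (INF a\<in>S. ereal (c a)) * ereal s"
    using \<open>0 < s\<close> by (intro ereal_mult_right_mono) auto
  then show ?thesis using \<open>0 < s\<close> by simp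
qed

context finite_entropy_density
begin

lemma transport_tail_const:
  fixes h :: "'a \<Rightarrow> real"
  assumes [measurable]: "h \<in> borel_measurable M" and fin: "tail_const M h < \<infinity>"
  shows "integrable M h" and "integrable M (\<lambda>x. h x * p x)"
    and "ereal ((\<integral>x. h x * p x \<partial>M) - (\<integral>x. h x \<partial>M)) \<le>
      tail_const M h * ereal (sqrt density_entropy + density_entropy / 2)"
proof -
  define S where "S = {\<alpha>. 0 < \<alpha> \<and> exp_moment M h \<alpha> < \<infinity>}"
  define c where "c \<alpha> = 2 / \<alpha> * (3 / 2 + ln (enn2real (exp_moment M h \<alpha>)))" for \<alpha>
  have tc: "tail_const M h = (INF \<alpha>\<in>S. ereal (c \<alpha>))" unfolding tail_const_def S_def c_def ..
  have "S \<noteq> {}" using fin by (auto simp: tc top_ereal_def[symmetric])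
  have at_\<alpha>: "integrable M h \<and> integrable M (\<lambda>x. h x * p x) \<and>
      (\<integral>x. h x * p x \<partial>M) - (\<integral>x. h x \<partial>M) \<le> c \<alpha> * (sqrt density_entropy + density_entropy / 2)"
    if "\<alpha> \<in> S" for \<alpha>
  proof -
    have \<alpha>: "0 < \<alpha>" "exp_moment M h \<alpha> < \<infinity>" using that by (auto simp: S_def)
    define Y where "Y x = \<alpha> / 2 * h x" for x
    have [measurable]: "Y \<in> borel_measurable M" unfolding Y_def by measurable
    have exp_Y: "exp (2 * \<bar>Y x\<bar>) = exp (\<alpha> * \<bar>h x\<bar>)" for x using \<alpha> by (simp add: Y_def abs_mult)
    have h_Y: "h = (\<lambda>x. 2 / \<alpha> * Y x)" using \<alpha> by (simp add: Y_def)
    have iexp: "integrable M (\<lambda>x. exp (2 * \<bar>Y x\<bar>))"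
      unfolding exp_Y using exp_moment_finite_integral(1)[OF assms(1) \<alpha>(2)] by simp
    have iexp1: "integrable M (\<lambda>x. exp \<bar>Y x\<bar>)" by (rule integrable_exp_abs_dominated[OF iexp]) auto
    have iY: "integrable M Y" by (rule integrable_of_integrable_exp_abs) (use iexp1 in auto)
    have iYp: "integrable M (\<lambda>x. Y x * p x)" by (rule integrable_mult_density) (use iexp1 in auto)
    have "(\<integral>x. h x * p x \<partial>M) - (\<integral>x. h x \<partial>M) = 2 / \<alpha> * ((\<integral>x. Y x * p x \<partial>M) - (\<integral>x. Y x \<partial>M))"
      unfolding h_Y by (simp add: right_diff_distrib mult.assoc)
    also have "\<dots> \<le> 2 / \<alpha> * ((3 / 2 + ln (\<integral>x. exp (2 * \<bar>Y x\<bar>) \<partial>M)) *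
        (sqrt density_entropy + density_entropy / 2))"
      using \<alpha> by (intro mult_left_mono transport_inequality iexp) auto
    also have "\<dots> = c \<alpha> * (sqrt density_entropy + density_entropy / 2)"
      unfolding c_def exp_Y exp_moment_finite_integral(2)[OF assms(1) \<alpha>(2)] by simp
    finally show ?thesis using iY iYp by (simp add: h_Y mult.assoc)
  qed
  from \<open>S \<noteq> {}\<close> obtain \<alpha> where "\<alpha> \<in> S" by auto
  then show "integrable M h" "integrable M (\<lambda>x. h x * p x)" using at_\<alpha> by auto
  show "ereal ((\<integral>x. h x * p x \<partial>M) - (\<integral>x. h x \<partial>M)) \<le>
      tail_const M h * ereal (sqrt density_entropy + density_entropy / 2)"
    unfolding tc using \<open>S \<noteq> {}\<close> at_\<alpha> density_entropy_nonneg by (intro ereal_le_INF_mult) auto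
qed

end

section \<open>Relative entropy of a density\<close>

lemma rel_entropy_density_eq:
  fixes P :: "'a measure" and R :: "'a \<Rightarrow> real"
  assumes "prob_space P" and [measurable]: "R \<in> borel_measurable P" and nonneg: "\<And>x. 0 \<le> R x"
  defines "Q \<equiv> density P (\<lambda>x. ennreal (R x))"
  shows "rel_entropy Q P =
    enn2ereal (\<integral>\<^sup>+x. ennreal (ln (R x)) \<partial>Q) - enn2ereal (\<integral>\<^sup>+x. ennreal (- ln (R x)) \<partial>Q)"
proof -
  interpret P: prob_space P by fact
  have sets: "sets Q = sets P" and ac: "absolutely_continuous P Q"
    unfolding Q_def by (auto intro: absolutely_continuousI_density)
  have "AE x in P. ennreal (R x) = RN_deriv P Q x"
    by (rule P.RN_deriv_unique) (auto simp: Q_def)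
  then have "AE x in Q. ennreal (R x) = RN_deriv P Q x"
    by (rule absolutely_continuous_AE[OF sets ac])
  then have RN: "AE x in Q. enn2real (RN_deriv P Q x) = R x"
    by eventually_elim (metis enn2real_ennreal nonneg)
  have "(\<integral>\<^sup>+x. ennreal (max 0 (ln (enn2real (RN_deriv P Q x)))) \<partial>Q) = (\<integral>\<^sup>+x. ennreal (ln (R x)) \<partial>Q)"
    "(\<integral>\<^sup>+x. ennreal (max 0 (- ln (enn2real (RN_deriv P Q x)))) \<partial>Q) = (\<integral>\<^sup>+x. ennreal (- ln (R x)) \<partial>Q)"
    using RN by (auto intro!: nn_integral_cong_AE)
  then show ?thesis unfolding rel_entropy_def using sets ac by simp
qed

lemma nn_integral_neg_ln_density_le_one:
  fixes P :: "'a measure" and R :: "'a \<Rightarrow> real"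
  assumes "prob_space P" and [measurable]: "R \<in> borel_measurable P" and nonneg: "\<And>x. 0 \<le> R x"
  shows "(\<integral>\<^sup>+x. ennreal (- ln (R x)) \<partial>density P (\<lambda>x. ennreal (R x))) \<le> 1"
proof -
  interpret P: prob_space P by fact
  have "(\<integral>\<^sup>+x. ennreal (- ln (R x)) \<partial>density P (\<lambda>x. ennreal (R x))) =
      (\<integral>\<^sup>+x. ennreal (R x * max 0 (- ln (R x))) \<partial>P)"
  proof (subst nn_integral_density, simp_all, intro nn_integral_cong)
    fix x
    have "ennreal (- ln (R x)) = ennreal (max 0 (- ln (R x)))" by simp
    then show "ennreal (R x) * ennreal (- ln (R x)) = ennreal (R x * max 0 (- ln (R x)))"
      using nonneg[of x] by (simp only: ennreal_mult)
  qed
  also have "\<dots> \<le> (\<integral>\<^sup>+x. 1 \<partial>P)"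
    using mult_neg_ln_le_one[OF nonneg] by (intro nn_integral_mono) (simp add: ennreal_le_1)
  finally show ?thesis by (simp add: P.emeasure_space_1)
qed

lemma rel_entropy_density_integrable:
  fixes P :: "'a measure" and R :: "'a \<Rightarrow> real"
  assumes "prob_space P" and [measurable]: "R \<in> borel_measurable P" and "\<And>x. 0 \<le> R x"
    and "integrable (density P (\<lambda>x. ennreal (R x))) (\<lambda>x. ln (R x))"
  shows "rel_entropy (density P (\<lambda>x. ennreal (R x))) P = ereal (\<integral>x. ln (R x) \<partial>density P (\<lambda>x. ennreal (R x)))"
proof -
  from integrableE[OF assms(4)] obtain r q where "0 \<le> r" "0 \<le> q"
    "(\<integral>\<^sup>+x. ennreal (ln (R x)) \<partial>density P (\<lambda>x. ennreal (R x))) = ennreal r"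
    "(\<integral>\<^sup>+x. ennreal (- ln (R x)) \<partial>density P (\<lambda>x. ennreal (R x))) = ennreal q"
    "(\<integral>x. ln (R x) \<partial>density P (\<lambda>x. ennreal (R x))) = r - q"
    by blast
  then show ?thesis by (simp add: rel_entropy_density_eq[OF assms(1-3)])
qed

lemma integrable_ln_density_of_rel_entropy_finite:
  fixes P :: "'a measure" and R :: "'a \<Rightarrow> real"
  assumes "prob_space P" and [measurable]: "R \<in> borel_measurable P" and "\<And>x. 0 \<le> R x"
    and fin: "rel_entropy (density P (\<lambda>x. ennreal (R x))) P < \<infinity>"
  shows "integrable (density P (\<lambda>x. ennreal (R x))) (\<lambda>x. ln (R x))"
proof -
  define Q where "Q = density P (\<lambda>x. ennreal (R x))"
  have neg: "(\<integral>\<^sup>+x. ennreal (- ln (R x)) \<partial>Q) \<le> 1"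
    unfolding Q_def by (rule nn_integral_neg_ln_density_le_one[OF assms(1-3)])
  then obtain b where b: "(\<integral>\<^sup>+x. ennreal (- ln (R x)) \<partial>Q) = ennreal b"
    by (cases "\<integral>\<^sup>+x. ennreal (- ln (R x)) \<partial>Q") (auto simp: top_unique)
  moreover have "(\<integral>\<^sup>+x. ennreal (ln (R x)) \<partial>Q) < \<infinity>"
  proof (rule ccontr)
    assume "\<not> ?thesis"
    then have "rel_entropy Q P = \<infinity>"
      using b unfolding Q_def rel_entropy_density_eq[OF assms(1-3)] by (simp add: less_top[symmetric])
    with fin show False by (simp add: Q_def)
  qed
  moreover have "(\<lambda>x. ln (R x)) \<in> borel_measurable Q" unfolding Q_def by measurable
  ultimately show ?thesis unfolding Q_def real_integrable_def by (auto simp: less_top)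
qed

lemma rel_entropy_finiteE:
  fixes P Q :: "'a measure"
  assumes P: "prob_space P" and Q: "prob_space Q" and fin: "rel_entropy Q P < \<infinity>"
  obtains p where "finite_entropy_density P p" and "Q = density P (\<lambda>x. ennreal (p x))"
    and "integrable Q (\<lambda>x. ln (p x))" and "rel_entropy Q P = ereal (\<integral>x. ln (p x) \<partial>Q)"
    and "rel_entropy Q P = ereal (finite_entropy_density.density_entropy P p)"
proof -
  interpret P: prob_space P by fact
  interpret Q: prob_space Q by fact
  define p where "p x = enn2real (RN_deriv P Q x)" for x
  have [measurable]: "p \<in> borel_measurable P" unfolding p_def by measurable
  have nonneg: "0 \<le> p x" for x by (simp add: p_def)
  have sets: "sets Q = sets P" and ac: "absolutely_continuous P Q"
    using fin unfolding rel_entropy_def by (auto split: if_splits)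
  have "Q = density P (RN_deriv P Q)" using P.density_RN_deriv[OF ac sets] by simp
  also have "\<dots> = density P (\<lambda>x. ennreal (p x))"
  proof (rule density_cong)
    show "AE x in P. RN_deriv P Q x = ennreal (p x)"
      using P.RN_deriv_finite[OF Q.sigma_finite_measure_axioms ac sets]
      by eventually_elim (auto simp: p_def less_top)
  qed auto
  finally have Q_eq: "Q = density P (\<lambda>x. ennreal (p x))" .
  have iln: "integrable Q (\<lambda>x. ln (p x))"
    using integrable_ln_density_of_rel_entropy_finite[OF P _ nonneg] fin Q_eq by simp
  have H: "rel_entropy Q P = ereal (\<integral>x. ln (p x) \<partial>Q)"
    using rel_entropy_density_integrable[OF P _ nonneg] iln Q_eq by simp
  have "integrable Q (\<lambda>_. 1::real)" by simp
  then have "integrable P p"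
    unfolding Q_eq by (subst (asm) integrable_density) (auto simp: nonneg)
  moreover have "(\<integral>x. p x \<partial>P) = (\<integral>_. 1 \<partial>Q)"
    unfolding Q_eq by (subst integral_density) (auto simp: nonneg)
  then have "(\<integral>x. p x \<partial>P) = 1" by (simp add: Q.prob_space)
  moreover have "integrable P (\<lambda>x. p x * ln (p x))"
    using iln unfolding Q_eq by (subst (asm) integrable_density) (auto simp: nonneg)
  ultimately interpret p: finite_entropy_density P p by unfold_locales (use nonneg in auto)
  have "(\<integral>x. ln (p x) \<partial>Q) = p.density_entropy"
    unfolding Q_eq p.density_entropy_def by (subst integral_density) (auto simp: nonneg)
  then show ?thesis using that p.finite_entropy_density_axioms Q_eq iln H by simp
qed

lemma rel_entropy_nonneg:
  assumes "prob_space P" and "prob_space Q"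
  shows "0 \<le> rel_entropy Q P"
proof (cases "rel_entropy Q P < \<infinity>")
  case True
  then obtain p where "finite_entropy_density P p"
    and "rel_entropy Q P = ereal (finite_entropy_density.density_entropy P p)"
    using rel_entropy_finiteE[OF assms] by blast
  then show ?thesis using finite_entropy_density.density_entropy_nonneg by simp
qed (simp add: not_less)

lemma rel_entropy_self:
  assumes "prob_space P"
  shows "rel_entropy P P = 0"
  using rel_entropy_density_integrable[OF assms, of "\<lambda>_. 1"] by (simp add: density_1)

lemma borel_probD:
  assumes "borel_prob \<mu>"
  shows "prob_space \<mu>" "sets \<mu> = sets borel"
  using assms unfolding borel_prob_def by auto

lemma rel_entropy_finite_density:
  fixes \<mu>0 \<mu>1 :: "'a::topological_space measure"
  assumes "borel_prob \<mu>0" "borel_prob \<mu>1" "rel_entropy \<mu>1 \<mu>0 < \<infinity>"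
  obtains p where "p \<in> borel_measurable borel" "\<And>x. 0 \<le> p x" "\<mu>1 = density \<mu>0 (\<lambda>x. ennreal (p x))"
    "integrable \<mu>1 (\<lambda>x. ln (p x))" "rel_entropy \<mu>1 \<mu>0 = ereal (\<integral>x. ln (p x) \<partial>\<mu>1)"
proof -
  note \<mu>0 = borel_probD[OF assms(1)]
  obtain p where p: "finite_entropy_density \<mu>0 p" "\<mu>1 = density \<mu>0 (\<lambda>x. ennreal (p x))"
    "integrable \<mu>1 (\<lambda>x. ln (p x))" "rel_entropy \<mu>1 \<mu>0 = ereal (\<integral>x. ln (p x) \<partial>\<mu>1)"
    using rel_entropy_finiteE[OF \<mu>0(1) borel_probD(1)[OF assms(2)] assms(3)] by blast
  have "p \<in> borel_measurable borel"
    using finite_entropy_density.p_measurable[OF p(1)] unfolding measurable_cong_sets[OF \<mu>0(2) refl] .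
  then show ?thesis using that finite_entropy_density.p_nonneg[OF p(1)] p(2-4) by blast
qed

lemma rel_entropy_finite_realE:
  assumes "borel_prob P" "borel_prob Q" "rel_entropy Q P < \<infinity>"
  obtains H where "rel_entropy Q P = ereal H" and "0 \<le> H"
  using rel_entropy_nonneg[OF borel_probD(1)[OF assms(1)] borel_probD(1)[OF assms(2)]] assms(3)
  by (cases "rel_entropy Q P") auto

section \<open>Couplings with exponential potentials\<close>

lemma couplingsD:
  assumes "\<pi> \<in> couplings \<mu> \<nu>"
  shows "prob_space \<pi>" "sets \<pi> = sets (borel \<Otimes>\<^sub>M borel)" "distr \<pi> borel fst = \<mu>" "distr \<pi> borel snd = \<nu>"
  using assms unfolding couplings_def by auto

context
  fixes P Q :: "('a::topological_space \<times> 'b::topological_space) measure" and R :: "'a \<times> 'b \<Rightarrow> real"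
    and A :: "'a \<Rightarrow> real" and B :: "'b \<Rightarrow> real" and \<mu> :: "'a measure" and \<nu> :: "'b measure"
  assumes P: "prob_space P" and Q: "Q \<in> couplings \<mu> \<nu>"
    and R [measurable]: "R \<in> borel_measurable P" and R_nonneg: "\<And>z. 0 \<le> R z"
    and Q_density: "Q = density P (\<lambda>z. ennreal (R z))"
    and [measurable]: "A \<in> borel_measurable borel" "B \<in> borel_measurable borel"
    and ln_R: "AE z in Q. ln (R z) = A (fst z) + B (snd z)"
    and A_integrable: "integrable \<mu> A"
begin

lemma integrable_fst_coupling_density: "integrable Q (\<lambda>z. A (fst z))"
proof -
  have [measurable_cong]: "sets Q = sets (borel \<Otimes>\<^sub>M borel)" using couplingsD(2)[OF Q] .
  show ?thesis
    using A_integrable unfolding couplingsD(3)[OF Q, symmetric] by (subst (asm) integrable_distr_eq) auto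
qed

lemma nn_integral_neg_snd_potential_finite: "(\<integral>\<^sup>+y. ennreal (- B y) \<partial>\<nu>) < \<infinity>"
proof -
  have [measurable_cong]: "sets Q = sets (borel \<Otimes>\<^sub>M borel)" using couplingsD(2)[OF Q] .
  have [measurable]: "R \<in> borel_measurable Q" using R by (simp add: Q_density)
  have "(\<integral>\<^sup>+y. ennreal (- B y) \<partial>\<nu>) = (\<integral>\<^sup>+z. ennreal (- B (snd z)) \<partial>Q)"
    unfolding couplingsD(4)[OF Q, symmetric] by (rule nn_integral_distr) auto
  \<comment> \<open>the negative part of B is controlled by those of ln R and of A\<close>
  also have "\<dots> \<le> (\<integral>\<^sup>+z. ennreal (- ln (R z)) + ennreal (A (fst z)) \<partial>Q)"
    using ln_R
  proof (intro nn_integral_mono_AE, eventually_elim)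
    case (elim z)
    have "ennreal (- B (snd z)) \<le> ennreal (max 0 (- ln (R z)) + max 0 (A (fst z)))"
      using elim by (intro ennreal_leI) auto
    then show ?case by (simp add: ennreal_plus)
  qed
  also have "\<dots> = (\<integral>\<^sup>+z. ennreal (- ln (R z)) \<partial>Q) + (\<integral>\<^sup>+z. ennreal (A (fst z)) \<partial>Q)"
    by (intro nn_integral_add) auto
  also have "\<dots> < \<infinity>"
  proof -
    have "(\<integral>\<^sup>+z. ennreal (- ln (R z)) \<partial>Q) \<le> 1"
      unfolding Q_density by (rule nn_integral_neg_ln_density_le_one[OF P R R_nonneg])
    moreover have "(\<integral>\<^sup>+z. ennreal (A (fst z)) \<partial>Q) < \<infinity>"
      using integrableD(2)[OF integrable_fst_coupling_density] by (simp add: less_top)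
    ultimately show ?thesis by (auto simp: less_top[symmetric] top_unique)
  qed
  finally show ?thesis .
qed

lemma rel_entropy_coupling_density:
  assumes B_integrable: "integrable \<nu> B"
  shows "rel_entropy Q P = ereal ((\<integral>x. A x \<partial>\<mu>) + (\<integral>y. B y \<partial>\<nu>))"
proof -
  have [measurable_cong]: "sets Q = sets (borel \<Otimes>\<^sub>M borel)" using couplingsD(2)[OF Q] .
  have [measurable]: "R \<in> borel_measurable Q" using R by (simp add: Q_density)
  have iB: "integrable Q (\<lambda>z. B (snd z))"
    using B_integrable unfolding couplingsD(4)[OF Q, symmetric] by (subst (asm) integrable_distr_eq) auto
  have "integrable Q (\<lambda>z. ln (R z))"
    using integrable_cong_AE[OF _ _ ln_R] integrable_fst_coupling_density iB by simp
  then have "rel_entropy Q P = ereal (\<integral>z. ln (R z) \<partial>Q)"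
    unfolding Q_density by (rule rel_entropy_density_integrable[OF P R R_nonneg])
  also have "(\<integral>z. ln (R z) \<partial>Q) = (\<integral>z. A (fst z) + B (snd z) \<partial>Q)"
    by (rule integral_cong_AE[OF _ _ ln_R]) auto
  also have "\<dots> = (\<integral>z. A (fst z) \<partial>Q) + (\<integral>z. B (snd z) \<partial>Q)"
    using integrable_fst_coupling_density iB by simp
  also have "\<dots> = (\<integral>x. A x \<partial>\<mu>) + (\<integral>y. B y \<partial>\<nu>)"
    unfolding couplingsD(3,4)[OF Q, symmetric] by (simp add: integral_distr)
  finally show ?thesis .
qed

end

lemma density_exp_potentials_ratio:
  fixes \<mu> :: "'a::topological_space measure" and \<nu> :: "'b::topological_space measure"
    and c :: "'a \<times> 'b \<Rightarrow> real" and F0 F1 p :: "'a \<Rightarrow> real" and G0 G1 q :: "'b \<Rightarrow> real"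
  assumes [measurable_cong]: "sets \<mu> = sets borel" "sets \<nu> = sets borel"
    and [measurable]: "c \<in> borel_measurable (borel \<Otimes>\<^sub>M borel)"
      "F0 \<in> borel_measurable borel" "F1 \<in> borel_measurable borel"
      "G0 \<in> borel_measurable borel" "G1 \<in> borel_measurable borel"
      "p \<in> borel_measurable borel" "q \<in> borel_measurable borel"
    and p: "\<And>x. 0 \<le> p x" and q: "\<And>y. 0 \<le> q y"
  shows "density (\<mu> \<Otimes>\<^sub>M \<nu>) (\<lambda>(x, y). ennreal (p x * q y * exp (F1 x + G1 y - c (x, y)))) =
    density (density (\<mu> \<Otimes>\<^sub>M \<nu>) (\<lambda>(x, y). ennreal (exp (F0 x + G0 y - c (x, y)))))
      (\<lambda>z. ennreal (p (fst z) * q (snd z) *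
        exp ((F1 (fst z) - F0 (fst z)) + (G1 (snd z) - G0 (snd z)))))"
proof -
  have [measurable_cong]: "sets (\<mu> \<Otimes>\<^sub>M \<nu>) = sets (borel \<Otimes>\<^sub>M borel)"
    using assms(1,2) by (intro sets_pair_measure_cong)
  define e where "e = (\<lambda>(x, y). ennreal (exp (F0 x + G0 y - c (x, y))))"
  define r where "r z = ennreal (p (fst z) * q (snd z) *
    exp ((F1 (fst z) - F0 (fst z)) + (G1 (snd z) - G0 (snd z))))" for z
  have "density (density (\<mu> \<Otimes>\<^sub>M \<nu>) e) r = density (\<mu> \<Otimes>\<^sub>M \<nu>) (\<lambda>z. e z * r z)"
    by (rule density_density_eq) (unfold e_def r_def, measurable)
  also have "\<dots> = density (\<mu> \<Otimes>\<^sub>M \<nu>) (\<lambda>(x, y). ennreal (p x * q y * exp (F1 x + G1 y - c (x, y))))"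
  proof (intro density_cong AE_I2)
    fix z :: "'a \<times> 'b"
    obtain x y where z: "z = (x, y)" by (cases z)
    have "exp (F0 x + G0 y - c (x, y)) * exp ((F1 x - F0 x) + (G1 y - G0 y)) = exp (F1 x + G1 y - c (x, y))"
      by (simp add: exp_add[symmetric])
    then show "e z * r z = (case z of (x, y) \<Rightarrow> ennreal (p x * q y * exp (F1 x + G1 y - c (x, y))))"
      using p[of x] q[of y] by (simp add: z e_def r_def ennreal_mult[symmetric] ac_simps)
  qed (unfold e_def r_def, measurable)
  finally show ?thesis unfolding e_def r_def ..
qed

lemma density_pair_measure_density:
  fixes \<mu> :: "'a measure" and \<nu> :: "'b measure" and p :: "'a \<Rightarrow> real" and q :: "'b \<Rightarrow> real"
    and h :: "'a \<Rightarrow> 'b \<Rightarrow> real"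
  assumes "sigma_finite_measure \<nu>" "sigma_finite_measure (density \<nu> (\<lambda>y. ennreal (q y)))"
    and [measurable]: "p \<in> borel_measurable \<mu>" "q \<in> borel_measurable \<nu>"
      "(\<lambda>(x, y). h x y) \<in> borel_measurable (\<mu> \<Otimes>\<^sub>M \<nu>)"
    and p: "\<And>x. 0 \<le> p x" and q: "\<And>y. 0 \<le> q y" and h: "\<And>x y. 0 \<le> h x y"
  shows "density (density \<mu> (\<lambda>x. ennreal (p x)) \<Otimes>\<^sub>M density \<nu> (\<lambda>y. ennreal (q y)))
      (\<lambda>(x, y). ennreal (h x y)) =
    density (\<mu> \<Otimes>\<^sub>M \<nu>) (\<lambda>(x, y). ennreal (p x * q y * h x y))"
proof -
  have "density \<mu> (\<lambda>x. ennreal (p x)) \<Otimes>\<^sub>M density \<nu> (\<lambda>y. ennreal (q y)) =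
      density (\<mu> \<Otimes>\<^sub>M \<nu>) (\<lambda>(x, y). ennreal (p x) * ennreal (q y))"
    using assms(1,2) by (intro pair_measure_density) auto
  then show ?thesis
    using p q h by (simp add: density_density_eq split_beta' ennreal_mult[symmetric] mult.assoc)
qed

lemma AE_fst_coupling:
  assumes "\<pi> \<in> couplings \<mu> \<nu>" and "AE x in \<mu>. P x" and "Measurable.pred borel P"
  shows "AE z in \<pi>. P (fst z)"
proof -
  have [measurable_cong]: "sets \<pi> = sets (borel \<Otimes>\<^sub>M borel)" using couplingsD(2)[OF assms(1)] .
  show ?thesis
    using assms(2,3) unfolding couplingsD(3)[OF assms(1), symmetric] by (subst (asm) AE_distr_iff) auto
qed

lemma AE_snd_coupling:
  assumes "\<pi> \<in> couplings \<mu> \<nu>" and "AE y in \<nu>. P y" and "Measurable.pred borel P"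
  shows "AE z in \<pi>. P (snd z)"
proof -
  have [measurable_cong]: "sets \<pi> = sets (borel \<Otimes>\<^sub>M borel)" using couplingsD(2)[OF assms(1)] .
  show ?thesis
    using assms(2,3) unfolding couplingsD(4)[OF assms(1), symmetric] by (subst (asm) AE_distr_iff) auto
qed

lemma rel_entropy_exp_potentials:
  fixes \<mu> \<mu>1 :: "'a::topological_space measure" and \<nu> \<nu>1 :: "'b::topological_space measure"
    and c :: "'a \<times> 'b \<Rightarrow> real" and F0 F1 p :: "'a \<Rightarrow> real" and G0 G1 q :: "'b \<Rightarrow> real"
  assumes [measurable_cong]: "sets \<mu> = sets borel" "sets \<nu> = sets borel"
    and [measurable]: "c \<in> borel_measurable (borel \<Otimes>\<^sub>M borel)"
      "F0 \<in> borel_measurable borel" "F1 \<in> borel_measurable borel"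
      "G0 \<in> borel_measurable borel" "G1 \<in> borel_measurable borel"
      "p \<in> borel_measurable borel" "q \<in> borel_measurable borel"
    and p: "\<And>x. 0 \<le> p x" and q: "\<And>y. 0 \<le> q y"
    and \<pi>0: "prob_space \<pi>0" "\<pi>0 = density (\<mu> \<Otimes>\<^sub>M \<nu>) (\<lambda>(x, y). ennreal (exp (F0 x + G0 y - c (x, y))))"
    and \<pi>1: "\<pi>1 \<in> couplings \<mu>1 \<nu>1"
      "\<pi>1 = density (\<mu> \<Otimes>\<^sub>M \<nu>) (\<lambda>(x, y). ennreal (p x * q y * exp (F1 x + G1 y - c (x, y))))"
    and p_pos: "AE x in \<mu>1. 0 < p x" and q_pos: "AE y in \<nu>1. 0 < q y"
    and F_integrable: "integrable \<mu>1 (\<lambda>x. ln (p x) + (F1 x - F0 x))"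
  shows "(\<integral>\<^sup>+y. ennreal (- (ln (q y) + (G1 y - G0 y))) \<partial>\<nu>1) < \<infinity>"
    and "integrable \<nu>1 (\<lambda>y. ln (q y) + (G1 y - G0 y)) \<Longrightarrow>
      rel_entropy \<pi>1 \<pi>0 =
        ereal ((\<integral>x. ln (p x) + (F1 x - F0 x) \<partial>\<mu>1) + (\<integral>y. ln (q y) + (G1 y - G0 y) \<partial>\<nu>1))"
proof -
  define R where "R z = p (fst z) * q (snd z) * exp ((F1 (fst z) - F0 (fst z)) + (G1 (snd z) - G0 (snd z)))"
    for z
  have "sets \<pi>0 = sets (borel \<Otimes>\<^sub>M borel)" unfolding \<pi>0(2) sets_density using assms(1,2) by (rule sets_pair_measure_cong)
  then have R_measurable: "R \<in> borel_measurable \<pi>0"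
    unfolding measurable_cong_sets[OF _ refl] R_def by measurable
  have R_nonneg: "0 \<le> R z" for z using p q by (simp add: R_def)
  have \<pi>1_\<pi>0: "\<pi>1 = density \<pi>0 (\<lambda>z. ennreal (R z))"
    unfolding \<pi>1(2) \<pi>0(2) R_def by (rule density_exp_potentials_ratio) (use assms(1,2) p q in auto)
  have ln_R: "AE z in \<pi>1. ln (R z) = (ln (p (fst z)) + (F1 (fst z) - F0 (fst z))) +
      (ln (q (snd z)) + (G1 (snd z) - G0 (snd z)))"
  proof -
    have "AE z in \<pi>1. 0 < p (fst z)" by (rule AE_fst_coupling[OF \<pi>1(1) p_pos]) measurable
    moreover have "AE z in \<pi>1. 0 < q (snd z)" by (rule AE_snd_coupling[OF \<pi>1(1) q_pos]) measurable
    ultimately show ?thesis by eventually_elim (simp add: R_def ln_mult)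
  qed
  note split = nn_integral_neg_snd_potential_finite rel_entropy_coupling_density
  show "(\<integral>\<^sup>+y. ennreal (- (ln (q y) + (G1 y - G0 y))) \<partial>\<nu>1) < \<infinity>"
    by (rule split(1)[OF \<pi>0(1) \<pi>1(1) R_measurable R_nonneg \<pi>1_\<pi>0 _ _ ln_R F_integrable]) auto
  show "rel_entropy \<pi>1 \<pi>0 =
      ereal ((\<integral>x. ln (p x) + (F1 x - F0 x) \<partial>\<mu>1) + (\<integral>y. ln (q y) + (G1 y - G0 y) \<partial>\<nu>1))"
    if "integrable \<nu>1 (\<lambda>y. ln (q y) + (G1 y - G0 y))"
    by (rule split(2)[OF \<pi>0(1) \<pi>1(1) R_measurable R_nonneg \<pi>1_\<pi>0 _ _ ln_R F_integrable that]) auto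
qed

lemma rel_entropy_exp_potentials_same_reference:
  fixes \<mu> \<mu>1 :: "'a::topological_space measure" and \<nu> \<nu>1 :: "'b::topological_space measure"
    and c :: "'a \<times> 'b \<Rightarrow> real" and F0 F1 :: "'a \<Rightarrow> real" and G0 G1 :: "'b \<Rightarrow> real"
  assumes "sets \<mu> = sets borel" "sets \<nu> = sets borel"
    and [measurable]: "c \<in> borel_measurable (borel \<Otimes>\<^sub>M borel)"
      "F0 \<in> borel_measurable borel" "F1 \<in> borel_measurable borel"
      "G0 \<in> borel_measurable borel" "G1 \<in> borel_measurable borel"
    and \<pi>0: "prob_space \<pi>0" "\<pi>0 = density (\<mu> \<Otimes>\<^sub>M \<nu>) (\<lambda>(x, y). ennreal (exp (F0 x + G0 y - c (x, y))))"
    and \<pi>1: "\<pi>1 \<in> couplings \<mu>1 \<nu>1"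
      "\<pi>1 = density (\<mu> \<Otimes>\<^sub>M \<nu>) (\<lambda>(x, y). ennreal (exp (F1 x + G1 y - c (x, y))))"
    and F_integrable: "integrable \<mu>1 (\<lambda>x. F1 x - F0 x)"
  shows "(\<integral>\<^sup>+y. ennreal (- (G1 y - G0 y)) \<partial>\<nu>1) < \<infinity>"
    and "integrable \<nu>1 (\<lambda>y. G1 y - G0 y) \<Longrightarrow>
      rel_entropy \<pi>1 \<pi>0 = ereal ((\<integral>x. F1 x - F0 x \<partial>\<mu>1) + (\<integral>y. G1 y - G0 y \<partial>\<nu>1))"
proof -
  have "\<pi>1 = density (\<mu> \<Otimes>\<^sub>M \<nu>) (\<lambda>(x, y). ennreal (1 * 1 * exp (F1 x + G1 y - c (x, y))))"
    using \<pi>1(2) by simp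
  note potentials = rel_entropy_exp_potentials[where p = "\<lambda>_. 1" and q = "\<lambda>_. 1",
      OF assms(1-7) _ _ _ _ \<pi>0 \<pi>1(1) this, simplified]
  show "(\<integral>\<^sup>+y. ennreal (- (G1 y - G0 y)) \<partial>\<nu>1) < \<infinity>"
    using potentials(1) F_integrable by simp
  show "rel_entropy \<pi>1 \<pi>0 = ereal ((\<integral>x. F1 x - F0 x \<partial>\<mu>1) + (\<integral>y. G1 y - G0 y \<partial>\<nu>1))"
    if "integrable \<nu>1 (\<lambda>y. G1 y - G0 y)"
    using potentials(2) F_integrable that by simp
qed

lemma rel_entropy_exp_potentials_product_reference:
  fixes \<mu>0 \<mu>1 :: "'a::topological_space measure" and \<nu>0 \<nu>1 :: "'b::topological_space measure"
    and c :: "'a \<times> 'b \<Rightarrow> real" and F0 F1 p :: "'a \<Rightarrow> real" and G0 G1 q :: "'b \<Rightarrow> real"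
  assumes [measurable_cong]: "sets \<mu>0 = sets borel" "sets \<nu>0 = sets borel"
    and "prob_space \<nu>0" "prob_space \<nu>1"
    and [measurable]: "c \<in> borel_measurable (borel \<Otimes>\<^sub>M borel)"
      "F0 \<in> borel_measurable borel" "F1 \<in> borel_measurable borel"
      "G0 \<in> borel_measurable borel" "G1 \<in> borel_measurable borel"
      "p \<in> borel_measurable borel" "q \<in> borel_measurable borel"
    and p: "\<And>x. 0 \<le> p x" and q: "\<And>y. 0 \<le> q y"
    and \<mu>1: "\<mu>1 = density \<mu>0 (\<lambda>x. ennreal (p x))" and \<nu>1: "\<nu>1 = density \<nu>0 (\<lambda>y. ennreal (q y))"
    and \<pi>0: "prob_space \<pi>0" "\<pi>0 = density (\<mu>0 \<Otimes>\<^sub>M \<nu>0) (\<lambda>(x, y). ennreal (exp (F0 x + G0 y - c (x, y))))"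
    and \<pi>1: "\<pi>1 \<in> couplings \<mu>1 \<nu>1"
      "\<pi>1 = density (\<mu>1 \<Otimes>\<^sub>M \<nu>1) (\<lambda>(x, y). ennreal (exp (F1 x + G1 y - c (x, y))))"
    and F_integrable: "integrable \<mu>1 (\<lambda>x. ln (p x) + (F1 x - F0 x))"
  shows "(\<integral>\<^sup>+y. ennreal (- (ln (q y) + (G1 y - G0 y))) \<partial>\<nu>1) < \<infinity>"
    and "integrable \<nu>1 (\<lambda>y. ln (q y) + (G1 y - G0 y)) \<Longrightarrow>
      rel_entropy \<pi>1 \<pi>0 =
        ereal ((\<integral>x. ln (p x) + (F1 x - F0 x) \<partial>\<mu>1) + (\<integral>y. ln (q y) + (G1 y - G0 y) \<partial>\<nu>1))"
proof -
  have [measurable_cong]: "sets (\<mu>0 \<Otimes>\<^sub>M \<nu>0) = sets (borel \<Otimes>\<^sub>M borel)"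
    using assms(1,2) by (rule sets_pair_measure_cong)
  have "\<pi>1 = density (\<mu>0 \<Otimes>\<^sub>M \<nu>0) (\<lambda>(x, y). ennreal (p x * q y * exp (F1 x + G1 y - c (x, y))))"
    unfolding \<pi>1(2) \<mu>1 \<nu>1 using assms(3) assms(4)[unfolded \<nu>1] p q
    by (intro density_pair_measure_density prob_space_imp_sigma_finite) auto
  moreover have "AE x in \<mu>1. 0 < p x" "AE y in \<nu>1. 0 < q y"
    unfolding \<mu>1 \<nu>1 by (simp_all add: AE_density)
  ultimately show "(\<integral>\<^sup>+y. ennreal (- (ln (q y) + (G1 y - G0 y))) \<partial>\<nu>1) < \<infinity>"
    and "integrable \<nu>1 (\<lambda>y. ln (q y) + (G1 y - G0 y)) \<Longrightarrow> rel_entropy \<pi>1 \<pi>0 =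
      ereal ((\<integral>x. ln (p x) + (F1 x - F0 x) \<partial>\<mu>1) + (\<integral>y. ln (q y) + (G1 y - G0 y) \<partial>\<nu>1))"
    using rel_entropy_exp_potentials[OF assms(1,2,5-11) p q \<pi>0 \<pi>1(1) _ _ _ F_integrable] by auto
qed

lemma rel_entropy_exp_potentials_product_eq:
  fixes \<mu>0 \<mu>1 :: "'a::topological_space measure" and \<nu>0 \<nu>1 :: "'b::topological_space measure"
    and c :: "'a \<times> 'b \<Rightarrow> real" and F0 F1 :: "'a \<Rightarrow> real" and G0 G1 :: "'b \<Rightarrow> real"
  assumes \<mu>: "borel_prob \<mu>0" "borel_prob \<mu>1" "rel_entropy \<mu>1 \<mu>0 < \<infinity>"
    and \<nu>: "borel_prob \<nu>0" "borel_prob \<nu>1" "rel_entropy \<nu>1 \<nu>0 < \<infinity>"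
    and measurable: "c \<in> borel_measurable (borel \<Otimes>\<^sub>M borel)"
      "F0 \<in> borel_measurable borel" "F1 \<in> borel_measurable borel"
      "G0 \<in> borel_measurable borel" "G1 \<in> borel_measurable borel"
    and \<pi>0: "\<pi>0 \<in> couplings \<mu>0 \<nu>0"
      "\<pi>0 = density (\<mu>0 \<Otimes>\<^sub>M \<nu>0) (\<lambda>(x, y). ennreal (exp (F0 x + G0 y - c (x, y))))"
    and \<pi>1: "\<pi>1 \<in> couplings \<mu>1 \<nu>1"
      "\<pi>1 = density (\<mu>1 \<Otimes>\<^sub>M \<nu>1) (\<lambda>(x, y). ennreal (exp (F1 x + G1 y - c (x, y))))"
    and F_integrable: "integrable \<mu>1 (\<lambda>x. F1 x - F0 x)"
    and G_integrable: "integrable \<nu>1 (\<lambda>y. G1 y - G0 y)"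
  shows "rel_entropy \<pi>1 \<pi>0 = rel_entropy \<mu>1 \<mu>0 + rel_entropy \<nu>1 \<nu>0 +
    ereal ((\<integral>x. F1 x - F0 x \<partial>\<mu>1) + (\<integral>y. G1 y - G0 y \<partial>\<nu>1))"
proof -
  obtain p where p: "p \<in> borel_measurable borel" "\<And>x. 0 \<le> p x" "\<mu>1 = density \<mu>0 (\<lambda>x. ennreal (p x))"
    "integrable \<mu>1 (\<lambda>x. ln (p x))" "rel_entropy \<mu>1 \<mu>0 = ereal (\<integral>x. ln (p x) \<partial>\<mu>1)"
    using rel_entropy_finite_density[OF \<mu>] by blast
  obtain q where q: "q \<in> borel_measurable borel" "\<And>y. 0 \<le> q y" "\<nu>1 = density \<nu>0 (\<lambda>y. ennreal (q y))"
    "integrable \<nu>1 (\<lambda>y. ln (q y))" "rel_entropy \<nu>1 \<nu>0 = ereal (\<integral>y. ln (q y) \<partial>\<nu>1)"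
    using rel_entropy_finite_density[OF \<nu>] by blast
  have "integrable \<mu>1 (\<lambda>x. ln (p x) + (F1 x - F0 x))" using p(4) F_integrable by simp
  moreover have "integrable \<nu>1 (\<lambda>y. ln (q y) + (G1 y - G0 y))" using q(4) G_integrable by simp
  ultimately have "rel_entropy \<pi>1 \<pi>0 =
      ereal ((\<integral>x. ln (p x) + (F1 x - F0 x) \<partial>\<mu>1) + (\<integral>y. ln (q y) + (G1 y - G0 y) \<partial>\<nu>1))"
    by (rule rel_entropy_exp_potentials_product_reference(2)[OF borel_probD(2)[OF \<mu>(1)]
        borel_probD(2)[OF \<nu>(1)] borel_probD(1)[OF \<nu>(1)] borel_probD(1)[OF \<nu>(2)] measurable p(1) q(1)
        p(2) q(2) p(3) q(3) couplingsD(1)[OF \<pi>0(1)] \<pi>0(2) \<pi>1])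
  also have "(\<integral>x. ln (p x) + (F1 x - F0 x) \<partial>\<mu>1) = (\<integral>x. ln (p x) \<partial>\<mu>1) + (\<integral>x. F1 x - F0 x \<partial>\<mu>1)"
    using p(4) F_integrable by (rule Bochner_Integration.integral_add)
  also have "(\<integral>y. ln (q y) + (G1 y - G0 y) \<partial>\<nu>1) = (\<integral>y. ln (q y) \<partial>\<nu>1) + (\<integral>y. G1 y - G0 y \<partial>\<nu>1)"
    using q(4) G_integrable by (rule Bochner_Integration.integral_add)
  finally show ?thesis unfolding p(5) q(5) by simp
qed

lemma integrable_snd_gap_same_reference:
  fixes \<mu> \<mu>' :: "'a::topological_space measure" and \<nu> :: "'b::topological_space measure"
    and c :: "'a \<times> 'b \<Rightarrow> real" and f f' :: "'a \<Rightarrow> real" and g g' :: "'b \<Rightarrow> real"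
  assumes \<mu>: "borel_prob \<mu>" and \<nu>: "borel_prob \<nu>"
    and measurable: "c \<in> borel_measurable (borel \<Otimes>\<^sub>M borel)"
      "f \<in> borel_measurable borel" "f' \<in> borel_measurable borel"
      "g \<in> borel_measurable borel" "g' \<in> borel_measurable borel"
    and \<pi>: "\<pi> \<in> couplings \<mu> \<nu>" "\<pi> = density (\<mu> \<Otimes>\<^sub>M \<nu>) (\<lambda>(x, y). ennreal (exp (f x + g y - c (x, y))))"
    and \<pi>': "\<pi>' \<in> couplings \<mu>' \<nu>" "\<pi>' = density (\<mu> \<Otimes>\<^sub>M \<nu>) (\<lambda>(x, y). ennreal (exp (f' x + g' y - c (x, y))))"
    and "integrable \<mu> (\<lambda>x. f' x - f x)" "integrable \<mu>' (\<lambda>x. f' x - f x)"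
  shows "integrable \<nu> (\<lambda>y. g' y - g y)"
proof (rule integrable_of_nn_integral_pos_neg)
  note same_reference = rel_entropy_exp_potentials_same_reference(1)[OF borel_probD(2)[OF \<mu>]
    borel_probD(2)[OF \<nu>]]
  show "(\<integral>\<^sup>+y. ennreal (- (g' y - g y)) \<partial>\<nu>) < \<infinity>"
    by (rule same_reference[OF measurable couplingsD(1)[OF \<pi>(1)] \<pi>(2) \<pi>' assms(13)])
  have "(\<integral>\<^sup>+y. ennreal (- (g y - g' y)) \<partial>\<nu>) < \<infinity>"
    using integrable_diff_commute[OF assms(12)]
    by (rule same_reference[OF measurable(1,3,2,5,4) couplingsD(1)[OF \<pi>'(1)] \<pi>'(2) \<pi>])
  then show "(\<integral>\<^sup>+y. ennreal (g' y - g y) \<partial>\<nu>) < \<infinity>" by simp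
qed (unfold measurable_cong_sets[OF borel_probD(2)[OF \<nu>] refl], use measurable in simp)

lemma integrable_snd_gap_product_reference:
  fixes \<mu> \<mu>' :: "'a::topological_space measure" and \<nu> :: "'b::topological_space measure"
    and c :: "'a \<times> 'b \<Rightarrow> real" and f f' :: "'a \<Rightarrow> real" and g g' :: "'b \<Rightarrow> real"
  assumes \<mu>: "borel_prob \<mu>" "borel_prob \<mu>'" "rel_entropy \<mu>' \<mu> < \<infinity>" "rel_entropy \<mu> \<mu>' < \<infinity>"
    and \<nu>: "borel_prob \<nu>"
    and measurable: "c \<in> borel_measurable (borel \<Otimes>\<^sub>M borel)"
      "f \<in> borel_measurable borel" "f' \<in> borel_measurable borel"
      "g \<in> borel_measurable borel" "g' \<in> borel_measurable borel"
    and \<pi>: "\<pi> \<in> couplings \<mu> \<nu>" "\<pi> = density (\<mu> \<Otimes>\<^sub>M \<nu>) (\<lambda>(x, y). ennreal (exp (f x + g y - c (x, y))))"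
    and \<pi>': "\<pi>' \<in> couplings \<mu>' \<nu>" "\<pi>' = density (\<mu>' \<Otimes>\<^sub>M \<nu>) (\<lambda>(x, y). ennreal (exp (f' x + g' y - c (x, y))))"
    and "integrable \<mu> (\<lambda>x. f' x - f x)" "integrable \<mu>' (\<lambda>x. f' x - f x)"
  shows "integrable \<nu> (\<lambda>y. g' y - g y)"
proof (rule integrable_of_nn_integral_pos_neg)
  obtain p where p: "p \<in> borel_measurable borel" "\<And>x. 0 \<le> p x" "\<mu>' = density \<mu> (\<lambda>x. ennreal (p x))"
    "integrable \<mu>' (\<lambda>x. ln (p x))"
    using rel_entropy_finite_density[OF \<mu>(1-3)] by blast
  obtain p' where p': "p' \<in> borel_measurable borel" "\<And>x. 0 \<le> p' x" "\<mu> = density \<mu>' (\<lambda>x. ennreal (p' x))"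
    "integrable \<mu> (\<lambda>x. ln (p' x))"
    using rel_entropy_finite_density[OF \<mu>(2,1,4)] by blast
  \<comment> \<open>the second marginals agree, so their relative density is the constant 1\<close>
  have \<nu>_1: "\<nu> = density \<nu> (\<lambda>_. ennreal 1)" by (simp add: density_1)
  note \<nu>' = borel_probD[OF \<nu>]
  note product_reference = rel_entropy_exp_potentials_product_reference(1)[where q = "\<lambda>_. 1"]
  have "(\<integral>\<^sup>+y. ennreal (- (ln 1 + (g' y - g y))) \<partial>\<nu>) < \<infinity>"
    using p(4) assms(16)
    by (intro product_reference[OF borel_probD(2)[OF \<mu>(1)] \<nu>'(2) \<nu>'(1) \<nu>'(1) measurable p(1) _ p(2) _
        p(3) \<nu>_1 couplingsD(1)[OF \<pi>(1)] \<pi>(2) \<pi>']) auto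
  then show "(\<integral>\<^sup>+y. ennreal (- (g' y - g y)) \<partial>\<nu>) < \<infinity>" by simp
  have "(\<integral>\<^sup>+y. ennreal (- (ln 1 + (g y - g' y))) \<partial>\<nu>) < \<infinity>"
    using p'(4) integrable_diff_commute[OF assms(15)]
    by (intro product_reference[OF borel_probD(2)[OF \<mu>(2)] \<nu>'(2) \<nu>'(1) \<nu>'(1) measurable(1,3,2,5,4) p'(1) _
        p'(2) _ p'(3) \<nu>_1 couplingsD(1)[OF \<pi>'(1)] \<pi>'(2) \<pi>]) auto
  then show "(\<integral>\<^sup>+y. ennreal (g' y - g y) \<partial>\<nu>) < \<infinity>" by simp
qed (unfold measurable_cong_sets[OF borel_probD(2)[OF \<nu>] refl], use measurable in simp)

lemma sym_rel_entropy_same_reference_eq: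
  fixes \<mu> \<mu>' :: "'a::topological_space measure" and \<nu> \<nu>' :: "'b::topological_space measure"
    and c :: "'a \<times> 'b \<Rightarrow> real" and f f' :: "'a \<Rightarrow> real" and g g' :: "'b \<Rightarrow> real"
  assumes "sets \<mu> = sets borel" "sets \<nu> = sets borel"
    and measurable: "c \<in> borel_measurable (borel \<Otimes>\<^sub>M borel)"
      "f \<in> borel_measurable borel" "f' \<in> borel_measurable borel"
      "g \<in> borel_measurable borel" "g' \<in> borel_measurable borel"
    and \<pi>: "\<pi> \<in> couplings \<mu> \<nu>" "\<pi> = density (\<mu> \<Otimes>\<^sub>M \<nu>) (\<lambda>(x, y). ennreal (exp (f x + g y - c (x, y))))"
    and \<pi>': "\<pi>' \<in> couplings \<mu>' \<nu>'" "\<pi>' = density (\<mu> \<Otimes>\<^sub>M \<nu>) (\<lambda>(x, y). ennreal (exp (f' x + g' y - c (x, y))))"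
    and "integrable \<mu> (\<lambda>x. f' x - f x)" "integrable \<mu>' (\<lambda>x. f' x - f x)"
    and "integrable \<nu> (\<lambda>y. g' y - g y)" "integrable \<nu>' (\<lambda>y. g' y - g y)"
  shows "rel_entropy \<pi>' \<pi> + rel_entropy \<pi> \<pi>' = ereal (((\<integral>x. f' x - f x \<partial>\<mu>') - (\<integral>x. f' x - f x \<partial>\<mu>)) +
    ((\<integral>y. g' y - g y \<partial>\<nu>') - (\<integral>y. g' y - g y \<partial>\<nu>)))"
proof -
  note same_reference = rel_entropy_exp_potentials_same_reference(2)[OF assms(1,2)]
  have "rel_entropy \<pi>' \<pi> = ereal ((\<integral>x. f' x - f x \<partial>\<mu>') + (\<integral>y. g' y - g y \<partial>\<nu>'))"
    by (rule same_reference[OF measurable couplingsD(1)[OF \<pi>(1)] \<pi>(2) \<pi>' assms(13,15)])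
  moreover have "rel_entropy \<pi> \<pi>' = ereal ((\<integral>x. f x - f' x \<partial>\<mu>) + (\<integral>y. g y - g' y \<partial>\<nu>))"
    by (rule same_reference[OF measurable(1,3,2,5,4) couplingsD(1)[OF \<pi>'(1)] \<pi>'(2) \<pi>
        integrable_diff_commute[OF assms(12)] integrable_diff_commute[OF assms(14)]])
  ultimately show ?thesis by (simp add: integral_diff_commute[where f = f] integral_diff_commute[where f = g])
qed

lemma sym_rel_entropy_product_reference_eq:
  fixes \<mu> \<mu>' :: "'a::topological_space measure" and \<nu> \<nu>' :: "'b::topological_space measure"
    and c :: "'a \<times> 'b \<Rightarrow> real" and f f' :: "'a \<Rightarrow> real" and g g' :: "'b \<Rightarrow> real"
  assumes \<mu>: "borel_prob \<mu>" "borel_prob \<mu>'" "rel_entropy \<mu>' \<mu> < \<infinity>" "rel_entropy \<mu> \<mu>' < \<infinity>"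
    and \<nu>: "borel_prob \<nu>" "borel_prob \<nu>'" "rel_entropy \<nu>' \<nu> < \<infinity>" "rel_entropy \<nu> \<nu>' < \<infinity>"
    and measurable: "c \<in> borel_measurable (borel \<Otimes>\<^sub>M borel)"
      "f \<in> borel_measurable borel" "f' \<in> borel_measurable borel"
      "g \<in> borel_measurable borel" "g' \<in> borel_measurable borel"
    and \<pi>: "\<pi> \<in> couplings \<mu> \<nu>" "\<pi> = density (\<mu> \<Otimes>\<^sub>M \<nu>) (\<lambda>(x, y). ennreal (exp (f x + g y - c (x, y))))"
    and \<pi>': "\<pi>' \<in> couplings \<mu>' \<nu>'" "\<pi>' = density (\<mu>' \<Otimes>\<^sub>M \<nu>') (\<lambda>(x, y). ennreal (exp (f' x + g' y - c (x, y))))"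
    and "integrable \<mu> (\<lambda>x. f' x - f x)" "integrable \<mu>' (\<lambda>x. f' x - f x)"
    and "integrable \<nu> (\<lambda>y. g' y - g y)" "integrable \<nu>' (\<lambda>y. g' y - g y)"
  shows "rel_entropy \<pi>' \<pi> + rel_entropy \<pi> \<pi>' =
    rel_entropy \<mu>' \<mu> + rel_entropy \<mu> \<mu>' + rel_entropy \<nu>' \<nu> + rel_entropy \<nu> \<nu>' +
    ereal (((\<integral>x. f' x - f x \<partial>\<mu>') - (\<integral>x. f' x - f x \<partial>\<mu>)) +
      ((\<integral>y. g' y - g y \<partial>\<nu>') - (\<integral>y. g' y - g y \<partial>\<nu>)))"
proof -
  have "rel_entropy \<pi>' \<pi> = rel_entropy \<mu>' \<mu> + rel_entropy \<nu>' \<nu> +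
      ereal ((\<integral>x. f' x - f x \<partial>\<mu>') + (\<integral>y. g' y - g y \<partial>\<nu>'))"
    by (rule rel_entropy_exp_potentials_product_eq[OF \<mu>(1-3) \<nu>(1-3) measurable \<pi> \<pi>' assms(19,21)])
  moreover have "rel_entropy \<pi> \<pi>' = rel_entropy \<mu> \<mu>' + rel_entropy \<nu> \<nu>' +
      ereal ((\<integral>x. f x - f' x \<partial>\<mu>) + (\<integral>y. g y - g' y \<partial>\<nu>))"
    by (rule rel_entropy_exp_potentials_product_eq[OF \<mu>(2,1,4) \<nu>(2,1,4) measurable(1,3,2,5,4) \<pi>' \<pi>
        integrable_diff_commute[OF assms(18)] integrable_diff_commute[OF assms(20)]])
  moreover obtain H1 H1' H2 H2' where "rel_entropy \<mu>' \<mu> = ereal H1" "rel_entropy \<mu> \<mu>' = ereal H1'"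
    "rel_entropy \<nu>' \<nu> = ereal H2" "rel_entropy \<nu> \<nu>' = ereal H2'"
    by (metis rel_entropy_finite_realE \<mu> \<nu>)
  ultimately show ?thesis by (simp add: integral_diff_commute[where f = f] integral_diff_commute[where f = g])
qed

section \<open>Bounding the symmetrised entropy\<close>

lemma marginal_gap_bound:
  fixes \<mu> \<mu>' :: "'a::topological_space measure" and h :: "'a \<Rightarrow> real"
  assumes \<mu>: "borel_prob \<mu>" "borel_prob \<mu>'" "rel_entropy \<mu>' \<mu> < \<infinity>"
    and h_measurable: "h \<in> borel_measurable borel"
    and tail: "tail_const \<mu> h < \<infinity> \<or> (\<mu>' = \<mu> \<and> integrable \<mu> h)"
  shows "integrable \<mu> h" and "integrable \<mu>' h"
    and "ereal ((\<integral>x. h x \<partial>\<mu>') - (\<integral>x. h x \<partial>\<mu>)) \<le> tail_const \<mu> h *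
      ereal (sqrt (real_of_ereal (rel_entropy \<mu>' \<mu>)) + real_of_ereal (rel_entropy \<mu>' \<mu>) / 2)"
proof -
  note prob = borel_probD(1)[OF \<mu>(1)] borel_probD(1)[OF \<mu>(2)]
  have [measurable]: "h \<in> borel_measurable \<mu>"
    using h_measurable unfolding measurable_cong_sets[OF borel_probD(2)[OF \<mu>(1)] refl] .
  have "integrable \<mu> h \<and> integrable \<mu>' h \<and> ereal ((\<integral>x. h x \<partial>\<mu>') - (\<integral>x. h x \<partial>\<mu>)) \<le> tail_const \<mu> h *
      ereal (sqrt (real_of_ereal (rel_entropy \<mu>' \<mu>)) + real_of_ereal (rel_entropy \<mu>' \<mu>) / 2)"
  proof (cases "tail_const \<mu> h < \<infinity>")
    case True
    obtain p where "finite_entropy_density \<mu> p" and \<mu>': "\<mu>' = density \<mu> (\<lambda>x. ennreal (p x))"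
      and H: "rel_entropy \<mu>' \<mu> = ereal (finite_entropy_density.density_entropy \<mu> p)"
      using rel_entropy_finiteE[OF prob(1,2) \<mu>(3)] by blast
    then interpret p: finite_entropy_density \<mu> p by simp
    have "integrable \<mu>' h \<longleftrightarrow> integrable \<mu> (\<lambda>x. h x * p x)"
      unfolding \<mu>' by (subst integrable_density) (auto simp: p.p_nonneg mult.commute)
    moreover have "(\<integral>x. h x \<partial>\<mu>') = (\<integral>x. h x * p x \<partial>\<mu>)"
      unfolding \<mu>' by (subst integral_density) (auto simp: p.p_nonneg mult.commute)
    moreover note tail_bound = p.transport_tail_const[OF \<open>h \<in> borel_measurable \<mu>\<close> True]
    ultimately show ?thesis unfolding H real_of_ereal.simps by simp
  next
    case False
    then have "\<mu>' = \<mu>" "integrable \<mu> h" using tail by auto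
    then show ?thesis using rel_entropy_self[OF prob(1)] by (simp add: zero_ereal_def[symmetric])
  qed
  then show "integrable \<mu> h" "integrable \<mu>' h"
    "ereal ((\<integral>x. h x \<partial>\<mu>') - (\<integral>x. h x \<partial>\<mu>)) \<le> tail_const \<mu> h *
      ereal (sqrt (real_of_ereal (rel_entropy \<mu>' \<mu>)) + real_of_ereal (rel_entropy \<mu>' \<mu>) / 2)"
    by auto
qed

lemma ereal_add_le_transport_bound:
  fixes C :: ereal and H D :: real
  assumes C: "0 \<le> C" and H: "0 \<le> H" and D: "ereal D \<le> C * ereal (sqrt H + H / 2)"
  shows "ereal (H + D) \<le> C * ereal (sqrt H) + (1 + C / 2) * ereal H"
proof (cases C)
  case (real c)
  then have "D \<le> c * (sqrt H + H / 2)" using D by simp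
  then show ?thesis using real by (simp add: algebra_simps)
next
  case PInf
  show ?thesis
  proof (cases "H = 0")
    case True
    then show ?thesis using D PInf by (simp add: zero_ereal_def[symmetric])
  next
    case False
    then show ?thesis using PInf H by simp
  qed
qed (use C in simp)

lemma sym_rel_entropy_bound_same_reference:
  fixes \<mu> \<mu>' :: "'a::topological_space measure" and \<nu> \<nu>' :: "'b::topological_space measure"
    and c :: "'a \<times> 'b \<Rightarrow> real" and f f' :: "'a \<Rightarrow> real" and g g' :: "'b \<Rightarrow> real"
  assumes \<mu>: "borel_prob \<mu>" "borel_prob \<mu>'" "rel_entropy \<mu>' \<mu> < \<infinity>"
    and \<nu>: "borel_prob \<nu>" "borel_prob \<nu>'" "rel_entropy \<nu>' \<nu> < \<infinity>"
    and measurable: "c \<in> borel_measurable (borel \<Otimes>\<^sub>M borel)"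
      "f \<in> borel_measurable borel" "f' \<in> borel_measurable borel"
      "g \<in> borel_measurable borel" "g' \<in> borel_measurable borel"
    and C1: "tail_const \<mu> (\<lambda>x. f' x - f x) < \<infinity>"
    and C2: "tail_const \<nu> (\<lambda>y. g' y - g y) < \<infinity> \<or> \<nu>' = \<nu>"
    and \<pi>: "\<pi> \<in> couplings \<mu> \<nu>" "\<pi> = density (\<mu> \<Otimes>\<^sub>M \<nu>) (\<lambda>(x, y). ennreal (exp (f x + g y - c (x, y))))"
    and \<pi>': "\<pi>' \<in> couplings \<mu>' \<nu>'" "\<pi>' = density (\<mu> \<Otimes>\<^sub>M \<nu>) (\<lambda>(x, y). ennreal (exp (f' x + g' y - c (x, y))))"
  shows "rel_entropy \<pi>' \<pi> + rel_entropy \<pi> \<pi>' \<le>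
    tail_const \<mu> (\<lambda>x. f' x - f x) *
      ereal (sqrt (real_of_ereal (rel_entropy \<mu>' \<mu>)) + real_of_ereal (rel_entropy \<mu>' \<mu>) / 2) +
    tail_const \<nu> (\<lambda>y. g' y - g y) *
      ereal (sqrt (real_of_ereal (rel_entropy \<nu>' \<nu>)) + real_of_ereal (rel_entropy \<nu>' \<nu>) / 2)"
proof -
  have gap_measurable: "(\<lambda>x. f' x - f x) \<in> borel_measurable borel" "(\<lambda>y. g' y - g y) \<in> borel_measurable borel"
    using measurable by simp_all
  note F = marginal_gap_bound[OF \<mu> gap_measurable(1) disjI1[OF C1]]
  have "integrable \<nu> (\<lambda>y. g' y - g y)" if "\<nu>' = \<nu>"
    using integrable_snd_gap_same_reference[OF \<mu>(1) \<nu>(1) measurable \<pi>, of \<pi>' \<mu>'] \<pi>' F(1,2) that by simp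
  with C2 have "tail_const \<nu> (\<lambda>y. g' y - g y) < \<infinity> \<or> (\<nu>' = \<nu> \<and> integrable \<nu> (\<lambda>y. g' y - g y))"
    by blast
  note G = marginal_gap_bound[OF \<nu> gap_measurable(2) this]
  have "rel_entropy \<pi>' \<pi> + rel_entropy \<pi> \<pi>' = ereal ((\<integral>x. f' x - f x \<partial>\<mu>') - (\<integral>x. f' x - f x \<partial>\<mu>)) +
      ereal ((\<integral>y. g' y - g y \<partial>\<nu>') - (\<integral>y. g' y - g y \<partial>\<nu>))"
    using sym_rel_entropy_same_reference_eq[OF borel_probD(2)[OF \<mu>(1)] borel_probD(2)[OF \<nu>(1)]
        measurable \<pi> \<pi>' F(1,2) G(1,2)] by simp
  also have "\<dots> \<le> tail_const \<mu> (\<lambda>x. f' x - f x) *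
      ereal (sqrt (real_of_ereal (rel_entropy \<mu>' \<mu>)) + real_of_ereal (rel_entropy \<mu>' \<mu>) / 2) +
    tail_const \<nu> (\<lambda>y. g' y - g y) *
      ereal (sqrt (real_of_ereal (rel_entropy \<nu>' \<nu>)) + real_of_ereal (rel_entropy \<nu>' \<nu>) / 2)"
    using F(3) G(3) by (rule add_mono)
  finally show ?thesis .
qed

lemma sym_rel_entropy_bound_product_reference:
  fixes \<mu> \<mu>' :: "'a::topological_space measure" and \<nu> \<nu>' :: "'b::topological_space measure"
    and c :: "'a \<times> 'b \<Rightarrow> real" and f f' :: "'a \<Rightarrow> real" and g g' :: "'b \<Rightarrow> real"
  assumes \<mu>: "borel_prob \<mu>" "borel_prob \<mu>'" "rel_entropy \<mu>' \<mu> < \<infinity>"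
    and \<nu>: "borel_prob \<nu>" "borel_prob \<nu>'" "rel_entropy \<nu>' \<nu> < \<infinity>"
    and measurable: "c \<in> borel_measurable (borel \<Otimes>\<^sub>M borel)"
      "f \<in> borel_measurable borel" "f' \<in> borel_measurable borel"
      "g \<in> borel_measurable borel" "g' \<in> borel_measurable borel"
    and C1: "tail_const \<mu> (\<lambda>x. f' x - f x) < \<infinity>"
    and C2: "tail_const \<nu> (\<lambda>y. g' y - g y) < \<infinity> \<or> \<nu>' = \<nu>"
    and \<pi>: "\<pi> \<in> couplings \<mu> \<nu>" "\<pi> = density (\<mu> \<Otimes>\<^sub>M \<nu>) (\<lambda>(x, y). ennreal (exp (f x + g y - c (x, y))))"
    and \<pi>': "\<pi>' \<in> couplings \<mu>' \<nu>'"
      "\<pi>' = density (\<mu>' \<Otimes>\<^sub>M \<nu>') (\<lambda>(x, y). ennreal (exp (f' x + g' y - c (x, y))))"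
  shows "rel_entropy \<pi>' \<pi> + rel_entropy \<pi> \<pi>' \<le>
    tail_const \<mu> (\<lambda>x. f' x - f x) * ereal (sqrt (real_of_ereal (rel_entropy \<mu>' \<mu>)))
    + (1 + tail_const \<mu> (\<lambda>x. f' x - f x) / 2) * rel_entropy \<mu>' \<mu> + rel_entropy \<mu> \<mu>'
    + tail_const \<nu> (\<lambda>y. g' y - g y) * ereal (sqrt (real_of_ereal (rel_entropy \<nu>' \<nu>)))
    + (1 + tail_const \<nu> (\<lambda>y. g' y - g y) / 2) * rel_entropy \<nu>' \<nu> + rel_entropy \<nu> \<nu>'"
proof (cases "rel_entropy \<mu> \<mu>' < \<infinity> \<and> rel_entropy \<nu> \<nu>' < \<infinity>")
  case False
  then show ?thesis by (auto simp: less_top[symmetric])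
next
  case True
  have gap_measurable: "(\<lambda>x. f' x - f x) \<in> borel_measurable borel" "(\<lambda>y. g' y - g y) \<in> borel_measurable borel"
    using measurable by simp_all
  note F = marginal_gap_bound[OF \<mu> gap_measurable(1) disjI1[OF C1]]
  have "integrable \<nu> (\<lambda>y. g' y - g y)" if "\<nu>' = \<nu>"
    using integrable_snd_gap_product_reference[OF \<mu> conjunct1[OF True] \<nu>(1) measurable \<pi>, of \<pi>']
      \<pi>' F(1,2) that by simp
  with C2 have "tail_const \<nu> (\<lambda>y. g' y - g y) < \<infinity> \<or> (\<nu>' = \<nu> \<and> integrable \<nu> (\<lambda>y. g' y - g y))"
    by blast
  note G = marginal_gap_bound[OF \<nu> gap_measurable(2) this]
  obtain H1 H2 where H1: "rel_entropy \<mu>' \<mu> = ereal H1" "0 \<le> H1"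
    and H2: "rel_entropy \<nu>' \<nu> = ereal H2" "0 \<le> H2"
    by (metis rel_entropy_finite_realE \<mu> \<nu>)
  obtain K1 K2 where K: "rel_entropy \<mu> \<mu>' = ereal K1" "rel_entropy \<nu> \<nu>' = ereal K2"
    by (metis rel_entropy_finite_realE \<mu>(1,2) \<nu>(1,2) True)
  define D1 where "D1 = (\<integral>x. f' x - f x \<partial>\<mu>') - (\<integral>x. f' x - f x \<partial>\<mu>)"
  define D2 where "D2 = (\<integral>y. g' y - g y \<partial>\<nu>') - (\<integral>y. g' y - g y \<partial>\<nu>)"
  have "rel_entropy \<pi>' \<pi> + rel_entropy \<pi> \<pi>' = ereal (H1 + D1) + ereal K1 + (ereal (H2 + D2) + ereal K2)"
    using sym_rel_entropy_product_reference_eq[OF \<mu> conjunct1[OF True] \<nu> conjunct2[OF True]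
        measurable \<pi> \<pi>' F(1,2) G(1,2)]
    unfolding H1(1) H2(1) K D1_def[symmetric] D2_def[symmetric] by (simp add: ac_simps)
  also have "\<dots> \<le>
      (tail_const \<mu> (\<lambda>x. f' x - f x) * ereal (sqrt H1) + (1 + tail_const \<mu> (\<lambda>x. f' x - f x) / 2) * ereal H1) +
      ereal K1 +
      ((tail_const \<nu> (\<lambda>y. g' y - g y) * ereal (sqrt H2) + (1 + tail_const \<nu> (\<lambda>y. g' y - g y) / 2) * ereal H2) +
      ereal K2)"
    using F(3) G(3) unfolding H1(1) H2(1) D1_def[symmetric] D2_def[symmetric] real_of_ereal.simps
    by (intro add_mono order.refl ereal_add_le_transport_bound prob_space.tail_const_nonneg
        borel_probD(1)[OF \<mu>(1)] borel_probD(1)[OF \<nu>(1)] H1(2) H2(2))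
  finally show ?thesis unfolding H1(1) H2(1) K by (simp add: ac_simps)
qed

theorem lemma3p2:
  fixes \<mu> \<mu>' :: "'a::polish_space measure" and \<nu> \<nu>' :: "'b::polish_space measure"
    and c :: "'a \<times> 'b \<Rightarrow> real"
    and f f' :: "'a \<Rightarrow> real" and g g' :: "'b \<Rightarrow> real"
    and \<pi> \<pi>' :: "('a \<times> 'b) measure"
  assumes c_meas: "c \<in> borel_measurable ((borel :: 'a measure) \<Otimes>\<^sub>M (borel :: 'b measure))"
    and mu: "borel_prob \<mu>" and mu': "borel_prob \<mu>'"
    and nu: "borel_prob \<nu>" and nu': "borel_prob \<nu>'"
    and Hmu: "rel_entropy \<mu>' \<mu> < \<infinity>" and Hnu: "rel_entropy \<nu>' \<nu> < \<infinity>"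
    and f_meas: "f \<in> borel_measurable borel" and f'_meas: "f' \<in> borel_measurable borel"
    and g_meas: "g \<in> borel_measurable borel" and g'_meas: "g' \<in> borel_measurable borel"
    and C1: "tail_const \<mu> (\<lambda>x. f' x - f x) < \<infinity>"
    and C2: "tail_const \<nu> (\<lambda>y. g' y - g y) < \<infinity> \<or> \<nu>' = \<nu>"
    and pi: "\<pi> \<in> couplings \<mu> \<nu>"
    and pi_dens: "\<pi> = density (\<mu> \<Otimes>\<^sub>M \<nu>) (\<lambda>(x,y). ennreal (exp (f x + g y - c (x,y))))"
  shows
   "(\<pi>' \<in> couplings \<mu>' \<nu>' \<and>
     \<pi>' = density (\<mu>' \<Otimes>\<^sub>M \<nu>') (\<lambda>(x,y). ennreal (exp (f' x + g' y - c (x,y)))) \<longrightarrow>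
       rel_entropy \<pi>' \<pi> + rel_entropy \<pi> \<pi>' \<le>
         tail_const \<mu> (\<lambda>x. f' x - f x) * ereal (sqrt (real_of_ereal (rel_entropy \<mu>' \<mu>)))
         + (1 + tail_const \<mu> (\<lambda>x. f' x - f x) / 2) * rel_entropy \<mu>' \<mu>
         + rel_entropy \<mu> \<mu>'
         + tail_const \<nu> (\<lambda>y. g' y - g y) * ereal (sqrt (real_of_ereal (rel_entropy \<nu>' \<nu>)))
         + (1 + tail_const \<nu> (\<lambda>y. g' y - g y) / 2) * rel_entropy \<nu>' \<nu>
         + rel_entropy \<nu> \<nu>')
  \<and> (\<pi>' \<in> couplings \<mu>' \<nu>' \<and>
     \<pi>' = density (\<mu> \<Otimes>\<^sub>M \<nu>) (\<lambda>(x,y). ennreal (exp (f' x + g' y - c (x,y)))) \<longrightarrow>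
       rel_entropy \<pi>' \<pi> + rel_entropy \<pi> \<pi>' \<le>
         tail_const \<mu> (\<lambda>x. f' x - f x) *
           ereal (sqrt (real_of_ereal (rel_entropy \<mu>' \<mu>)) + real_of_ereal (rel_entropy \<mu>' \<mu>) / 2)
         + tail_const \<nu> (\<lambda>y. g' y - g y) *
           ereal (sqrt (real_of_ereal (rel_entropy \<nu>' \<nu>)) + real_of_ereal (rel_entropy \<nu>' \<nu>) / 2))"
proof -
  note hyps = mu mu' Hmu nu nu' Hnu c_meas f_meas f'_meas g_meas g'_meas C1 C2 pi pi_dens
  show ?thesis
    using sym_rel_entropy_bound_product_reference[OF hyps] sym_rel_entropy_bound_same_reference[OF hyps]
    by blast
qed

end
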